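(* Let $\rho\colon[0,1]^2\times\mathbb{R}^n\to\mathbb{R}$ be a two-parameter family of probability densities with $\rho(s,t,\cdot)\in\mathcal P_2(\mathbb{R}^n)$, and let $\Psi_s,\Psi_t,\tilde\Phi_s,\tilde\Phi_t\colon[0,1]^2\times\mathbb{R}^n\to\mathbb{R}$. Define $$B(\Psi_s,\Psi_t,\rho)=\sqrt{\int \|\nabla\Psi_s\|^2\rho\, dx\cdot \int\|\nabla\Psi_t\|^2\rho\, dx-\Big(\int \nabla\Psi_s\cdot \nabla\Psi_t\,\rho\, dx\Big)^2 }.$$ Suppose that $$B^{-1}\nabla\cdot\Big(\rho \Big[\nabla\Psi_s\int \|\nabla\Psi_t\|^2\rho\,dx-\nabla\Psi_t\int \nabla\Psi_s\cdot \nabla\Psi_t\,\rho\,dx\Big]\Big)=\nabla\cdot(\rho\nabla\tilde\Phi_s),$$ $$B^{-1}\nabla\cdot\Big(\rho\Big[\nabla\Psi_t\int \|\nabla\Psi_s\|^2\rho\,dx-\nabla\Psi_s\int \nabla\Psi_s\cdot \nabla\Psi_t\,\rho\,dx\Big]\Big)=\nabla\cdot(\rho\nabla\tilde\Phi_t),$$ $$\partial_s\tilde\Phi_s+\partial_t\tilde\Phi_t+\nabla\tilde\Phi_s\cdot \nabla\Psi_s+\nabla\tilde\Phi_t\cdot \nabla\Psi_t-B^{-1}\Big[\tfrac{1}{2}\|\nabla\Psi_s\|^2\int\|\nabla\Psi_t\|^2\rho\,dx +\tfrac{1}{2}\|\nabla\Psi_t\|^2\int\|\nabla\Psi_s\|^2\rho\,dx-(\nabla\Psi_t\cdot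 \nabla\Psi_s)\int\nabla\Psi_t\cdot \nabla\Psi_s\,\rho\, dx\Big]=0,$$ $$\partial_s\rho+\nabla\cdot (\rho\nabla\Psi_s)=0,\qquad \partial_t\rho+\nabla\cdot (\rho\nabla\Psi_t)=0.$$ Then $(\rho,\Psi_s,\Psi_t)$ satisfies the critical-point system of the variational problem $$\inf_{\Psi_s,\Psi_t,\rho}\int_0^1\int_0^1 B(\Psi_s,\Psi_t,\rho)\,ds\,dt$$ subject to $\partial_s\rho+\nabla\cdot(\rho\nabla\Psi_s)=0$, $\partial_t\rho+\nabla\cdot(\rho\nabla\Psi_t)=0$, with the boundary curves $\rho(0,t,\cdot)$, $\rho(1,t,\cdot)$, $\rho(s,0,\cdot)$, $\rho(s,1,\cdot)$, $s,t\in[0,1]$, held fixed (with $\tilde\Phi_s,\tilde\Phi_t$ the Lagrange multipliers of the two continuity constraints).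
   Context: All integrals $\int$ without limits are over $\mathbb{R}^n$. $\mathcal P_2(\mathbb{R}^n)$ denotes probability densities with finite second moments. The boundary data are four densities at the corners of $[0,1]^2$ and the four Wasserstein-2 geodesics connecting them along the edges $s=0$, $s=1$, $t=0$, $t=1$. The critical-point system is the system obtained by setting to zero the $L^2$ first variations of the Lagrangian $\int_0^1\int_0^1 B\,ds\,dt+\int_0^1\int_0^1\int \tilde\Phi_s(\partial_s\rho+\nabla\cdot(\rho\nabla\Psi_s))+\tilde\Phi_t(\partial_t\rho+\nabla\cdot(\rho\nabla\Psi_t))\,dx\,ds\,dt$ with respect to $\rho,\Psi_s,\Psi_t,\tilde\Phi_s,\tilde\Phi_t$. *)

theory Defs
  imports "HOL-Analysis.Analysis"
begin

type_synonym 'n pt = "real \<times> real \<times> (real^'n)"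

definition pd :: "'a::real_normed_vector \<Rightarrow> ('a \<Rightarrow> real) \<Rightarrow> 'a \<Rightarrow> real" where
  "pd v f p = deriv (\<lambda>h. f (p + h *\<^sub>R v)) 0"

fun Ck :: "nat \<Rightarrow> 'a::real_normed_vector set \<Rightarrow> ('a \<Rightarrow> real) \<Rightarrow> bool" where
  "Ck 0 U f = continuous_on U f"
| "Ck (Suc k) U f = ((\<forall>p\<in>U. f differentiable (at p)) \<and> (\<forall>v. Ck k U (pd v f)))"

definition smooth_on :: "'a::real_normed_vector set \<Rightarrow> ('a \<Rightarrow> real) \<Rightarrow> bool" where
  "smooth_on U f = (\<forall>k. Ck k U f)"

definition Dom :: "('n::finite) pt set" where
  "Dom = {0<..<1} \<times> {0<..<1} \<times> UNIV"

definition dS :: "('n::finite pt \<Rightarrow> real) \<Rightarrow> 'n pt \<Rightarrow> real" where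
  "dS f p = pd (1, 0, 0) f p"

definition dT :: "('n::finite pt \<Rightarrow> real) \<Rightarrow> 'n pt \<Rightarrow> real" where
  "dT f p = pd (0, 1, 0) f p"

definition grad :: "('n::finite pt \<Rightarrow> real) \<Rightarrow> 'n pt \<Rightarrow> real^'n" where
  "grad f p = (\<chi> i. pd (0, 0, axis i 1) f p)"

definition divg :: "('n::finite pt \<Rightarrow> real^'n) \<Rightarrow> 'n pt \<Rightarrow> real" where
  "divg V p = (\<Sum>i\<in>UNIV. pd (0, 0, axis i 1) (\<lambda>q. V q $ i) p)"

definition xint :: "('n::finite pt \<Rightarrow> real) \<Rightarrow> real \<Rightarrow> real \<Rightarrow> real" where
  "xint F s t = (\<integral>x. F (s, t, x) \<partial>lborel)"

definition G :: "('n::finite pt \<Rightarrow> real) \<Rightarrow> ('n pt \<Rightarrow> real) \<Rightarrow> ('n pt \<Rightarrow> real) \<Rightarrow> real \<Rightarrow> real \<Rightarrow> real" where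
  "G f g \<rho> s t = xint (\<lambda>p. (grad f p \<bullet> grad g p) * \<rho> p) s t"

definition Bcost :: "('n::finite pt \<Rightarrow> real) \<Rightarrow> ('n pt \<Rightarrow> real) \<Rightarrow> ('n pt \<Rightarrow> real) \<Rightarrow> real \<Rightarrow> real \<Rightarrow> real" where
  "Bcost \<Psi>s \<Psi>t \<rho> s t = sqrt (G \<Psi>s \<Psi>s \<rho> s t * G \<Psi>t \<Psi>t \<rho> s t - (G \<Psi>s \<Psi>t \<rho> s t)\<^sup>2)"

definition Lag :: "('n::finite pt \<Rightarrow> real) \<Rightarrow> ('n pt \<Rightarrow> real) \<Rightarrow> ('n pt \<Rightarrow> real)
    \<Rightarrow> ('n pt \<Rightarrow> real) \<Rightarrow> ('n pt \<Rightarrow> real) \<Rightarrow> real" where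
  "Lag \<rho> \<Psi>s \<Psi>t \<Phi>s \<Phi>t =
     set_lebesgue_integral lborel {0..1} (\<lambda>s. set_lebesgue_integral lborel {0..1} (\<lambda>t.
        Bcost \<Psi>s \<Psi>t \<rho> s t
      + xint (\<lambda>p. \<Phi>s p * (dS \<rho> p + divg (\<lambda>q. \<rho> q *\<^sub>R grad \<Psi>s q) p)
                 + \<Phi>t p * (dT \<rho> p + divg (\<lambda>q. \<rho> q *\<^sub>R grad \<Psi>t q) p)) s t))"

text \<open>Admissible variations: smooth, compactly supported in the open square times R^n
  (so the boundary curves of rho are held fixed).\<close>
definition test_fun :: "('n::finite pt \<Rightarrow> real) \<Rightarrow> bool" where
  "test_fun \<eta> = (smooth_on UNIV \<eta> \<and>
     (\<exists>K. compact K \<and> K \<subseteq> Dom \<and> (\<forall>p. p \<notin> K \<longrightarrow> \<eta> p = 0)))"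

definition critical_point :: "('n::finite pt \<Rightarrow> real) \<Rightarrow> ('n pt \<Rightarrow> real) \<Rightarrow> ('n pt \<Rightarrow> real)
    \<Rightarrow> ('n pt \<Rightarrow> real) \<Rightarrow> ('n pt \<Rightarrow> real) \<Rightarrow> bool" where
  "critical_point \<rho> \<Psi>s \<Psi>t \<Phi>s \<Phi>t = (\<forall>\<eta>. test_fun \<eta> \<longrightarrow>
      ((\<lambda>\<epsilon>. Lag (\<lambda>p. \<rho> p + \<epsilon> * \<eta> p) \<Psi>s \<Psi>t \<Phi>s \<Phi>t) has_real_derivative 0) (at 0)
    \<and> ((\<lambda>\<epsilon>. Lag \<rho> (\<lambda>p. \<Psi>s p + \<epsilon> * \<eta> p) \<Psi>t \<Phi>s \<Phi>t) has_real_derivative 0) (at 0)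
    \<and> ((\<lambda>\<epsilon>. Lag \<rho> \<Psi>s (\<lambda>p. \<Psi>t p + \<epsilon> * \<eta> p) \<Phi>s \<Phi>t) has_real_derivative 0) (at 0)
    \<and> ((\<lambda>\<epsilon>. Lag \<rho> \<Psi>s \<Psi>t (\<lambda>p. \<Phi>s p + \<epsilon> * \<eta> p) \<Phi>t) has_real_derivative 0) (at 0)
    \<and> ((\<lambda>\<epsilon>. Lag \<rho> \<Psi>s \<Psi>t \<Phi>s (\<lambda>p. \<Phi>t p + \<epsilon> * \<eta> p)) has_real_derivative 0) (at 0))"

end

(*
  Varying a multiplier
  changes only the constraint terms, which vanish identically by the continuity equations.
  Varying \<Psi>s (or \<Psi>t) changes only the cost: the Gram entries become quadratic in \<epsilon>, so the
  integrand is sqrt (B\<^sup>2 + \<epsilon> a + \<epsilon>\<^sup>2 b) with derivative a / (2 B), and after integrating by parts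
  in x the \<Psi>-equation says exactly that a / (2 B) plus the constraint term vanishes.  Varying \<rho>
  perturbs the Gram entries and the constraints linearly; integrating by parts in x and using the
  \<rho>-equation turns the first variation into the integral of \<partial>\<^sub>s(\<Phi>\<^sub>s \<eta>) + \<partial>\<^sub>t(\<Phi>\<^sub>t \<eta>), which vanishes
  because \<eta> has compact support in the open square.  Differentiation under the (s, t)-integral
  is justified by a uniform second-order bound for the square root on the support of \<eta>.
*)

theory Submission
  imports Defs
begin

section \<open>Directional derivatives and \<open>C\<^sup>1\<close> functions\<close>

lemma pd_has_real_derivative:
  fixes f :: "'a::real_normed_vector \<Rightarrow> real"
  assumes "f differentiable (at p)"
  shows "((\<lambda>h. f (p + h *\<^sub>R v)) has_real_derivative pd v f p) (at 0)"
proof -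
  obtain f' where f': "(f has_derivative f') (at p)"
    using assms differentiable_def by blast
  have "((\<lambda>h. p + h *\<^sub>R v) has_derivative (\<lambda>h. h *\<^sub>R v)) (at 0)"
    by (auto intro!: derivative_eq_intros)
  from has_derivative_compose[OF this] f'
  have "((\<lambda>h. f (p + h *\<^sub>R v)) has_derivative (\<lambda>h. f' (h *\<^sub>R v))) (at 0)"
    by simp
  moreover have "(\<lambda>h. f' (h *\<^sub>R v)) = (*) (f' v)"
    using has_derivative_linear[OF f'] by (auto simp: linear_scale fun_eq_iff)
  ultimately have D: "((\<lambda>h. f (p + h *\<^sub>R v)) has_real_derivative f' v) (at 0)"
    by (simp add: has_field_derivative_def)
  then have "pd v f p = f' v"
    unfolding pd_def by (rule DERIV_imp_deriv)
  with D show ?thesis by simp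
qed

lemma pd_has_real_derivative_at:
  fixes f :: "'a::real_normed_vector \<Rightarrow> real"
  assumes "f differentiable (at (p + u *\<^sub>R v))"
  shows "((\<lambda>h. f (p + h *\<^sub>R v)) has_real_derivative pd v f (p + u *\<^sub>R v)) (at u)"
proof -
  have "((\<lambda>h. f (p + (h + u) *\<^sub>R v)) has_real_derivative pd v f (p + u *\<^sub>R v)) (at 0)"
    using pd_has_real_derivative[OF assms] by (simp add: algebra_simps)
  then show ?thesis
    using DERIV_shift[where f="\<lambda>h. f (p + h *\<^sub>R v)" and x=0 and z=u] by simp
qed

lemma pd_cong_open:
  assumes "open U" "p \<in> U" "\<And>q. q \<in> U \<Longrightarrow> f q = g q"
  shows "pd v f p = pd v g p"
proof -
  have "open ((\<lambda>h::real. p + h *\<^sub>R v) -` U)"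
    by (rule continuous_open_vimage) (auto intro!: continuous_intros assms)
  then have "eventually (\<lambda>h. h \<in> (\<lambda>h::real. p + h *\<^sub>R v) -` U) (nhds 0)"
    using assms(2) by (intro eventually_nhds_in_open) auto
  then have "eventually (\<lambda>h. f (p + h *\<^sub>R v) = g (p + h *\<^sub>R v)) (nhds 0)"
    by eventually_elim (use assms(3) in auto)
  then show ?thesis
    unfolding pd_def by (intro deriv_cong_ev) auto
qed

lemma pd_add:
  assumes "f differentiable (at p)" "g differentiable (at p)"
  shows "pd v (\<lambda>q. f q + g q) p = pd v f p + pd v g p"
  unfolding pd_def[of v "\<lambda>q. f q + g q"]
  by (rule DERIV_imp_deriv) (intro DERIV_add pd_has_real_derivative assms)

lemma pd_diff:
  assumes "f differentiable (at p)" "g differentiable (at p)"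
  shows "pd v (\<lambda>q. f q - g q) p = pd v f p - pd v g p"
  unfolding pd_def[of v "\<lambda>q. f q - g q"]
  by (rule DERIV_imp_deriv) (intro DERIV_diff pd_has_real_derivative assms)

lemma pd_mult:
  assumes "f differentiable (at p)" "g differentiable (at p)"
  shows "pd v (\<lambda>q. f q * g q) p = pd v f p * g p + f p * pd v g p"
proof -
  have "((\<lambda>h. f (p + h *\<^sub>R v) * g (p + h *\<^sub>R v)) has_real_derivative
      pd v f p * g (p + 0 *\<^sub>R v) + pd v g p * f (p + 0 *\<^sub>R v)) (at 0)"
    by (intro DERIV_mult pd_has_real_derivative assms)
  then show ?thesis
    unfolding pd_def[of v "\<lambda>q. f q * g q"] by (subst DERIV_imp_deriv) (auto simp: algebra_simps)
qed

lemma pd_cmult: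
  assumes "f differentiable (at p)"
  shows "pd v (\<lambda>q. c * f q) p = c * pd v f p"
  unfolding pd_def[of v "\<lambda>q. c * f q"]
  by (rule DERIV_imp_deriv) (intro DERIV_cmult pd_has_real_derivative assms)

lemma pd_const: "pd v (\<lambda>q. c) p = 0"
  unfolding pd_def by (rule DERIV_imp_deriv) simp

lemma pd_eq_0_outside:
  assumes "compact K" "\<And>q. q \<notin> K \<Longrightarrow> f q = 0" "p \<notin> K"
  shows "pd v f p = 0"
proof -
  have "pd v f p = pd v (\<lambda>q. 0) p"
    by (rule pd_cong_open[of "- K"]) (use assms compact_imp_closed in auto)
  then show ?thesis
    by (simp add: pd_const)
qed

lemma continuous_on_UNIV_vanishing_outside:
  fixes h :: "'a::t2_space \<Rightarrow> real"
  assumes "open U" "continuous_on U h" "compact K" "K \<subseteq> U" "\<And>p. p \<notin> K \<Longrightarrow> h p = 0"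
  shows "continuous_on UNIV h"
proof -
  have "continuous_on (- K) h"
    using continuous_on_const[of "- K" 0]
    by (rule continuous_on_cong[THEN iffD1, rotated 2]) (use assms in auto)
  then have "continuous_on (U \<union> - K) h"
    using assms by (intro continuous_on_open_Un) (auto intro!: closed_open[THEN iffD1] compact_imp_closed)
  moreover have "U \<union> - K = UNIV"
    using assms by auto
  ultimately show ?thesis
    by simp
qed

definition C1_on :: "'a::real_normed_vector set \<Rightarrow> ('a \<Rightarrow> real) \<Rightarrow> bool" where
  "C1_on U f \<longleftrightarrow> continuous_on U f \<and> (\<forall>p\<in>U. f differentiable (at p)) \<and> (\<forall>v. continuous_on U (pd v f))"

definition C2_on :: "'a::real_normed_vector set \<Rightarrow> ('a \<Rightarrow> real) \<Rightarrow> bool" where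
  "C2_on U f \<longleftrightarrow> C1_on U f \<and> (\<forall>v. C1_on U (pd v f))"

lemma C1_on_continuous_on: "C1_on U f \<Longrightarrow> continuous_on U f"
  unfolding C1_on_def by blast

lemma C1_on_differentiable: "C1_on U f \<Longrightarrow> p \<in> U \<Longrightarrow> f differentiable (at p)"
  unfolding C1_on_def by blast

lemma C1_on_continuous_on_pd: "C1_on U f \<Longrightarrow> continuous_on U (pd v f)"
  unfolding C1_on_def by blast

lemma C2_on_C1_on: "C2_on U f \<Longrightarrow> C1_on U f"
  unfolding C2_on_def by blast

lemma C2_on_C1_on_pd: "C2_on U f \<Longrightarrow> C1_on U (pd v f)"
  unfolding C2_on_def by blast

lemma smooth_on_imp_C2_on:
  assumes "smooth_on U f"
  shows "C2_on U f"
proof -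
  have "Ck 0 U f" "Ck (Suc 0) U f" "Ck (Suc (Suc 0)) U f"
    using assms unfolding smooth_on_def by blast+
  then show ?thesis
    unfolding C2_on_def C1_on_def by (simp only: Ck.simps) blast
qed

lemma smooth_on_subset: "smooth_on U f \<Longrightarrow> V \<subseteq> U \<Longrightarrow> smooth_on V f"
proof -
  have "Ck k U f \<Longrightarrow> Ck k V f" if "V \<subseteq> U" for k and f :: "'a \<Rightarrow> real"
    using that by (induction k arbitrary: f) (auto intro: continuous_on_subset)
  then show "smooth_on U f \<Longrightarrow> V \<subseteq> U \<Longrightarrow> smooth_on V f"
    unfolding smooth_on_def by blast
qed

lemma C1_on_const: "C1_on U (\<lambda>p. c)"
  unfolding C1_on_def by (auto simp: pd_const)

lemma C1_on_add:
  assumes "C1_on U f" "C1_on U g"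
  shows "C1_on U (\<lambda>p. f p + g p)"
proof -
  have "continuous_on U (\<lambda>p. pd v f p + pd v g p)" for v
    using assms by (intro continuous_intros C1_on_continuous_on_pd)
  then have "continuous_on U (pd v (\<lambda>p. f p + g p))" for v
    by (rule continuous_on_cong[THEN iffD1, rotated 2])
      (use assms in \<open>auto simp: pd_add C1_on_differentiable\<close>)
  then show ?thesis
    using assms unfolding C1_on_def by (auto intro!: continuous_intros)
qed

lemma C1_on_diff:
  assumes "C1_on U f" "C1_on U g"
  shows "C1_on U (\<lambda>p. f p - g p)"
proof -
  have "continuous_on U (\<lambda>p. pd v f p - pd v g p)" for v
    using assms by (intro continuous_intros C1_on_continuous_on_pd)
  then have "continuous_on U (pd v (\<lambda>p. f p - g p))" for v
    by (rule continuous_on_cong[THEN iffD1, rotated 2])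
      (use assms in \<open>auto simp: pd_diff C1_on_differentiable\<close>)
  then show ?thesis
    using assms unfolding C1_on_def by (auto intro!: continuous_intros)
qed

lemma C1_on_mult:
  assumes "C1_on U f" "C1_on U g"
  shows "C1_on U (\<lambda>p. f p * g p)"
proof -
  have "continuous_on U (\<lambda>p. pd v f p * g p + f p * pd v g p)" for v
    using assms by (intro continuous_intros C1_on_continuous_on_pd C1_on_continuous_on)
  then have "continuous_on U (pd v (\<lambda>p. f p * g p))" for v
    by (rule continuous_on_cong[THEN iffD1, rotated 2])
      (use assms in \<open>auto simp: pd_mult C1_on_differentiable\<close>)
  then show ?thesis
    using assms unfolding C1_on_def by (auto intro!: continuous_intros)
qed

lemma C1_on_cmult: "C1_on U f \<Longrightarrow> C1_on U (\<lambda>p. c * f p)"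
  using C1_on_mult[OF C1_on_const] by blast

lemma C1_on_sum: "(\<And>i. i \<in> I \<Longrightarrow> C1_on U (f i)) \<Longrightarrow> C1_on U (\<lambda>p. \<Sum>i\<in>I. f i p)"
  by (induction I rule: infinite_finite_induct) (simp_all add: C1_on_const C1_on_add)

section \<open>Integration by parts in space\<close>

lemma lborel_integral_vanishing_outside_cbox:
  fixes g :: "'a::euclidean_space \<Rightarrow> real"
  assumes "continuous_on UNIV g" "\<And>x. x \<notin> cbox a b \<Longrightarrow> g x = 0"
  shows "integrable lborel g" "integral\<^sup>L lborel g = integral (cbox a b) g"
proof -
  have eq: "(\<lambda>x. indicator (cbox a b) x *\<^sub>R g x) = g"
    using assms(2) by (auto simp: fun_eq_iff split: split_indicator)
  have si: "set_integrable lborel (cbox a b) g"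
    unfolding set_integrable_def
    by (rule borel_integrable_compact) (auto intro: continuous_on_subset[OF assms(1)])
  then show "integrable lborel g"
    unfolding set_integrable_def eq .
  show "integral\<^sup>L lborel g = integral (cbox a b) g"
    using set_borel_integral_eq_integral(2)[OF si] unfolding set_lebesgue_integral_def eq .
qed

lemma lborel_integral_translate:
  fixes g :: "'a::euclidean_space \<Rightarrow> real"
  assumes "continuous_on UNIV g"
  shows "integral\<^sup>L lborel (\<lambda>x. g (x + c)) = integral\<^sup>L lborel g"
proof -
  have m: "g \<in> borel_measurable borel"
    using assms by (rule borel_measurable_continuous_onI)
  have "integral\<^sup>L lborel g = integral\<^sup>L (distr lborel borel ((+) c)) g"
    by (simp add: lborel_distr_plus)
  also have "\<dots> = integral\<^sup>L lborel (\<lambda>x. g (c + x))"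
    by (rule integral_distr) (auto simp: m)
  finally show ?thesis
    by (simp add: add.commute)
qed

lemma add_scaleR_Basis_notin_cbox:
  fixes a b x u :: "'a::euclidean_space"
  assumes "u \<in> Basis" "x \<notin> cbox (a - \<Sum>Basis) (b + \<Sum>Basis)" "\<bar>h\<bar> \<le> 1"
  shows "x + h *\<^sub>R u \<notin> cbox a b"
proof
  assume "x + h *\<^sub>R u \<in> cbox a b"
  then have H: "\<And>j. j \<in> Basis \<Longrightarrow> a \<bullet> j \<le> x \<bullet> j + h * (u \<bullet> j) \<and> x \<bullet> j + h * (u \<bullet> j) \<le> b \<bullet> j"
    by (auto simp: mem_box inner_add_left)
  have "x \<in> cbox (a - \<Sum>Basis) (b + \<Sum>Basis)"
    unfolding mem_box
  proof safe
    fix j :: 'a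
    assume j: "j \<in> Basis"
    have "\<bar>u \<bullet> j\<bar> \<le> 1"
      using assms(1) j by (auto simp: inner_Basis)
    then have "\<bar>h * (u \<bullet> j)\<bar> \<le> 1"
      using assms(3) by (simp add: abs_mult mult_le_one)
    moreover have "(a - \<Sum>Basis) \<bullet> j = a \<bullet> j - 1" "(b + \<Sum>Basis) \<bullet> j = b \<bullet> j + 1"
      using j by (auto simp: inner_diff_left inner_add_left)
    ultimately show "(a - \<Sum>Basis) \<bullet> j \<le> x \<bullet> j" "x \<bullet> j \<le> (b + \<Sum>Basis) \<bullet> j"
      using H[OF j] by linarith+
  qed
  with assms(2) show False
    by blast
qed

text \<open>The integral of a compactly supported function is invariant under translation along \<open>u\<close>;
  differentiating the translated integrals under the integral sign (Leibniz rule on a slightly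
  larger box) shows that the integral of the directional derivative vanishes.\<close>
lemma lborel_integral_directional_derivative_eq_0:
  fixes g D :: "'a::euclidean_space \<Rightarrow> real"
  assumes u: "u \<in> Basis"
    and der: "\<And>x. ((\<lambda>h. g (x + h *\<^sub>R u)) has_real_derivative D x) (at 0)"
    and cg: "continuous_on UNIV g" and cD: "continuous_on UNIV D"
    and zg: "\<And>x. x \<notin> cbox a b \<Longrightarrow> g x = 0" and zD: "\<And>x. x \<notin> cbox a b \<Longrightarrow> D x = 0"
  shows "integral\<^sup>L lborel D = 0"
proof -
  define a' where "a' = a - \<Sum>Basis"
  define b' where "b' = b + \<Sum>Basis"
  define \<Phi> where "\<Phi> h = integral (cbox a' b') (\<lambda>x. g (x + h *\<^sub>R u))" for h
  define U where "U = {-1<..<(1::real)}"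
  have cgs: "continuous_on UNIV (\<lambda>x. g (x + c))" for c
    by (rule continuous_on_compose2[OF cg]) (auto intro!: continuous_intros)
  have const: "\<Phi> h = integral\<^sup>L lborel g" if "h \<in> U" for h
  proof -
    have "\<Phi> h = integral\<^sup>L lborel (\<lambda>x. g (x + h *\<^sub>R u))"
      unfolding \<Phi>_def
      by (rule lborel_integral_vanishing_outside_cbox(2)[symmetric, OF cgs])
        (use that zg add_scaleR_Basis_notin_cbox[OF u] in \<open>auto simp: a'_def b'_def U_def\<close>)
    also have "\<dots> = integral\<^sup>L lborel g"
      by (rule lborel_integral_translate[OF cg])
    finally show ?thesis .
  qed
  have derh: "((\<lambda>h. g (x + h *\<^sub>R u)) has_real_derivative D (x + h0 *\<^sub>R u)) (at h0)" for x h0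
  proof -
    have "((\<lambda>h. g (x + (h + h0) *\<^sub>R u)) has_real_derivative D (x + h0 *\<^sub>R u)) (at 0)"
      using der[of "x + h0 *\<^sub>R u"] by (simp add: algebra_simps)
    then show ?thesis
      using DERIV_shift[where f="\<lambda>h. g (x + h *\<^sub>R u)" and x=0 and z=h0] by simp
  qed
  have "(\<Phi> has_field_derivative integral (cbox a' b') (\<lambda>x. D (x + 0 *\<^sub>R u))) (at 0 within U)"
    unfolding \<Phi>_def
  proof (rule leibniz_rule_field_derivative[where fx="\<lambda>h x. D (x + h *\<^sub>R u)"])
    show "((\<lambda>h. g (x + h *\<^sub>R u)) has_field_derivative D (x + h *\<^sub>R u)) (at h within U)" for h x
      using derh by (rule has_field_derivative_at_within)
    show "(\<lambda>x. g (x + h *\<^sub>R u)) integrable_on cbox a' b'" for h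
      by (rule integrable_continuous) (rule continuous_on_subset[OF cgs], auto)
    have "continuous_on UNIV (\<lambda>z::real \<times> 'a. D (snd z + fst z *\<^sub>R u))"
      by (rule continuous_on_compose2[OF cD]) (auto intro!: continuous_intros)
    then show "continuous_on (U \<times> cbox a' b') (\<lambda>(h, x). D (x + h *\<^sub>R u))"
      by (auto simp: case_prod_unfold intro: continuous_on_subset)
    show "0 \<in> U" "convex U"
      by (auto simp: U_def)
  qed
  moreover have "at (0::real) within U = at 0"
    by (rule at_within_open) (auto simp: U_def)
  ultimately have d1: "(\<Phi> has_field_derivative integral (cbox a' b') D) (at 0)"
    by simp
  have "open U" "(0::real) \<in> U"
    by (auto simp: U_def)
  then have d2: "(\<Phi> has_field_derivative 0) (at 0)"
    using DERIV_const has_field_derivative_transform_within_open const by metis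
  have "integral\<^sup>L lborel D = integral (cbox a' b') D"
  proof (rule lborel_integral_vanishing_outside_cbox(2)[OF cD])
    fix x
    assume "x \<notin> cbox a' b'"
    then have "x + 0 *\<^sub>R u \<notin> cbox a b"
      using add_scaleR_Basis_notin_cbox[OF u, of x a b 0] by (auto simp: a'_def b'_def)
    then show "D x = 0"
      using zD by simp
  qed
  with DERIV_unique[OF d1 d2] show ?thesis
    by simp
qed

lemma mem_Dom_iff [simp]: "(s, t, x) \<in> Dom \<longleftrightarrow> s \<in> {0<..<1} \<and> t \<in> {0<..<1}"
  by (auto simp: Dom_def)

lemma open_Dom: "open Dom"
  unfolding Dom_def by (intro open_Times) auto

lemma xint_continuous_vanishing_outside_cbox:
  fixes h :: "'n::finite pt \<Rightarrow> real"
  assumes c: "continuous_on UNIV h" and z: "\<And>s t x. x \<notin> cbox a b \<Longrightarrow> h (s, t, x) = 0"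
  shows "integrable lborel (\<lambda>x. h (s, t, x))"
    and "xint h s t = integral (cbox a b) (\<lambda>x. h (s, t, x))"
    and "continuous_on UNIV (\<lambda>z. xint h (fst z) (snd z))"
proof -
  have cs: "continuous_on UNIV (\<lambda>x. h (s, t, x))" for s t
    by (rule continuous_on_compose2[OF c]) (auto intro!: continuous_intros)
  show "integrable lborel (\<lambda>x. h (s, t, x))"
    by (rule lborel_integral_vanishing_outside_cbox(1)[OF cs z])
  have eq: "xint h s t = integral (cbox a b) (\<lambda>x. h (s, t, x))" for s t
    unfolding xint_def by (rule lborel_integral_vanishing_outside_cbox(2)[OF cs z])
  then show "xint h s t = integral (cbox a b) (\<lambda>x. h (s, t, x))" .
  have "continuous_on UNIV (\<lambda>w::(real \<times> real) \<times> (real^'n). h (fst (fst w), snd (fst w), snd w))"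
    by (rule continuous_on_compose2[OF c]) (auto intro!: continuous_intros)
  then have "continuous_on UNIV (\<lambda>z. integral (cbox a b) (\<lambda>x. h (fst z, snd z, x)))"
    by (intro integral_continuous_on_param) (auto simp: case_prod_unfold intro: continuous_on_subset)
  then show "continuous_on UNIV (\<lambda>z. xint h (fst z) (snd z))"
    by (simp add: eq)
qed

lemma xint_add:
  assumes "integrable lborel (\<lambda>x. f (s, t, x))" "integrable lborel (\<lambda>x. g (s, t, x))"
  shows "xint (\<lambda>p. f p + g p) s t = xint f s t + xint g s t"
  unfolding xint_def using assms by simp

lemma xint_diff:
  assumes "integrable lborel (\<lambda>x. f (s, t, x))" "integrable lborel (\<lambda>x. g (s, t, x))"
  shows "xint (\<lambda>p. f p - g p) s t = xint f s t - xint g s t"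
  unfolding xint_def using assms by simp

lemma xint_cmult: "xint (\<lambda>p. c * f p) s t = c * xint f s t"
  unfolding xint_def by simp

lemma xint_cong: "(\<And>x. f (s, t, x) = g (s, t, x)) \<Longrightarrow> xint f s t = xint g s t"
  unfolding xint_def by simp

lemma grad_nth: "grad f p $ i = pd (0, 0, axis i 1) f p"
  by (simp add: grad_def)

lemma C1_on_grad: "C2_on U f \<Longrightarrow> C1_on U (\<lambda>p. grad f p $ i)"
  unfolding grad_nth by (rule C2_on_C1_on_pd)

lemma C1_on_inner_grad:
  assumes "C2_on U f" "C2_on U g"
  shows "C1_on U (\<lambda>p. grad f p \<bullet> grad g p)"
proof -
  have "C1_on U (\<lambda>p. \<Sum>i\<in>UNIV. grad f p $ i * grad g p $ i)"
    by (intro C1_on_sum C1_on_mult C1_on_grad assms)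
  then show ?thesis
    by (simp add: inner_vec_def)
qed

lemma C1_on_scaleR_grad: "C1_on U \<rho> \<Longrightarrow> C2_on U f \<Longrightarrow> C1_on U (\<lambda>q. (\<rho> q *\<^sub>R grad f q) $ i)"
  by (simp add: C1_on_mult C1_on_grad)

lemma pd_add_cmult:
  assumes "p \<in> U" "C1_on U f" "C1_on U g"
  shows "pd v (\<lambda>q. f q + e * g q) p = pd v f p + e * pd v g p"
  using assms by (simp add: pd_add pd_cmult C1_on_differentiable differentiable_mult)

lemma grad_add_cmult:
  assumes "p \<in> U" "C1_on U f" "C1_on U g"
  shows "grad (\<lambda>q. f q + e * g q) p = grad f p + e *\<^sub>R grad g p"
  unfolding grad_def using pd_add_cmult[OF assms] by (simp add: vec_eq_iff)

lemma continuous_on_divg: "(\<And>i. C1_on U (\<lambda>q. V q $ i)) \<Longrightarrow> continuous_on U (divg V)"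
  unfolding divg_def[abs_def] by (intro continuous_on_sum C1_on_continuous_on_pd) auto

lemma divg_add_scaleR:
  assumes "p \<in> U" "\<And>i. C1_on U (\<lambda>q. V q $ i)" "\<And>i. C1_on U (\<lambda>q. W q $ i)"
  shows "divg (\<lambda>q. V q + e *\<^sub>R W q) p = divg V p + e * divg W p"
  using pd_add_cmult[OF assms(1) assms(2,3)] by (simp add: divg_def sum.distrib sum_distrib_left)

lemma divg_cong_open:
  assumes "open U" "p \<in> U" "\<And>q. q \<in> U \<Longrightarrow> V q = W q"
  shows "divg V p = divg W p"
  unfolding divg_def by (intro sum.cong refl pd_cong_open[OF assms(1,2)]) (simp add: assms(3))

lemma divg_eq_0_outside:
  assumes "compact K" "\<And>q. q \<notin> K \<Longrightarrow> V q = 0" "p \<notin> K"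
  shows "divg V p = 0"
  unfolding divg_def using pd_eq_0_outside[OF assms(1) _ assms(3)] assms(2) by simp

lemma divg_scaleR_grad_add_cmult:
  assumes "p \<in> Dom" "C1_on Dom \<rho>" "C2_on Dom \<Psi>" "C2_on Dom \<eta>"
  shows "divg (\<lambda>q. \<rho> q *\<^sub>R grad (\<lambda>p. \<Psi> p + e * \<eta> p) q) p
       = divg (\<lambda>q. \<rho> q *\<^sub>R grad \<Psi> q) p + e * divg (\<lambda>q. \<rho> q *\<^sub>R grad \<eta> q) p"
proof -
  have "divg (\<lambda>q. \<rho> q *\<^sub>R grad (\<lambda>p. \<Psi> p + e * \<eta> p) q) p
      = divg (\<lambda>q. \<rho> q *\<^sub>R grad \<Psi> q + e *\<^sub>R (\<rho> q *\<^sub>R grad \<eta> q)) p"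
    using assms by (intro divg_cong_open[OF open_Dom assms(1)])
      (simp add: grad_add_cmult C2_on_C1_on algebra_simps)
  also have "\<dots> = divg (\<lambda>q. \<rho> q *\<^sub>R grad \<Psi> q) p + e * divg (\<lambda>q. \<rho> q *\<^sub>R grad \<eta> q) p"
    using assms by (intro divg_add_scaleR C1_on_scaleR_grad)
  finally show ?thesis .
qed

lemma divg_add_cmult_scaleR_grad:
  assumes "p \<in> Dom" "C1_on Dom \<rho>" "C1_on Dom \<eta>" "C2_on Dom f"
  shows "divg (\<lambda>q. (\<rho> q + e * \<eta> q) *\<^sub>R grad f q) p
       = divg (\<lambda>q. \<rho> q *\<^sub>R grad f q) p + e * divg (\<lambda>q. \<eta> q *\<^sub>R grad f q) p"
proof -
  have "(\<lambda>q. (\<rho> q + e * \<eta> q) *\<^sub>R grad f q) = (\<lambda>q. \<rho> q *\<^sub>R grad f q + e *\<^sub>R (\<eta> q *\<^sub>R grad f q))"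
    by (auto simp: fun_eq_iff algebra_simps)
  then show ?thesis
    using assms by (simp only:) (intro divg_add_scaleR C1_on_scaleR_grad)
qed

lemma grad_eq_0_outside:
  assumes "compact K" "\<And>q. q \<notin> K \<Longrightarrow> f q = 0" "p \<notin> K"
  shows "grad f p = 0"
  unfolding grad_def using pd_eq_0_outside[OF assms] by (simp add: vec_eq_iff)

text \<open>Integration by parts in \<open>x\<close>: apply the previous lemma to each product \<open>\<Phi> W\<^sub>i\<close>.\<close>
lemma xint_divg_by_parts:
  fixes \<Phi> :: "'n::finite pt \<Rightarrow> real" and W :: "'n pt \<Rightarrow> real^'n"
  assumes st: "s \<in> {0<..<1}" "t \<in> {0<..<1}"
    and C\<Phi>: "C1_on Dom \<Phi>" and CW: "\<And>i. C1_on Dom (\<lambda>q. W q $ i)"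
    and K: "compact K" "K \<subseteq> Dom" and box: "\<And>p. p \<in> K \<Longrightarrow> snd (snd p) \<in> cbox a b"
    and supp: "(\<forall>p. p \<notin> K \<longrightarrow> \<Phi> p = 0) \<or> (\<forall>p. p \<notin> K \<longrightarrow> W p = 0)"
  shows "xint (\<lambda>p. \<Phi> p * divg W p) s t + xint (\<lambda>p. grad \<Phi> p \<bullet> W p) s t = 0"
proof -
  define e where "e i = ((0::real), (0::real), axis i (1::real) :: real^'n)" for i
  define F where "F i q = \<Phi> q * W q $ i" for i q
  define L where "L i p = pd (e i) \<Phi> p * W p $ i" for i p
  define R where "R i p = \<Phi> p * pd (e i) (\<lambda>q. W q $ i) p" for i p
  have CF: "C1_on Dom (F i)" for i
    unfolding F_def by (intro C1_on_mult C\<Phi> CW)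
  have vanish: "(\<Phi> p = 0 \<and> pd (e i) \<Phi> p = 0) \<or> (W p $ i = 0 \<and> pd (e i) (\<lambda>q. W q $ i) p = 0)"
    if "p \<notin> K" for i p
  proof (cases "\<forall>p. p \<notin> K \<longrightarrow> \<Phi> p = 0")
    case True
    then have "\<And>q. q \<notin> K \<Longrightarrow> \<Phi> q = 0"
      by blast
    then show ?thesis
      using that pd_eq_0_outside[OF K(1), of \<Phi>] by blast
  next
    case False
    then have "\<And>q. q \<notin> K \<Longrightarrow> W q $ i = 0"
      using supp by auto
    then show ?thesis
      using that pd_eq_0_outside[OF K(1), of "\<lambda>q. W q $ i"] by blast
  qed
  have outside: "F i p = 0" "L i p = 0" "R i p = 0" if "p \<notin> K" for i p
    using vanish[OF that, of i] by (auto simp: F_def L_def R_def)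
  have pdF: "pd (e i) (F i) p = L i p + R i p" if "p \<in> Dom" for i p
    unfolding F_def L_def R_def using that by (intro pd_mult C1_on_differentiable[OF C\<Phi>] C1_on_differentiable[OF CW])
  have notK: "(s', t', x) \<notin> K" if "x \<notin> cbox a b" for x s' t'
    using box that by force
  have cont_Dom: "continuous_on Dom (F i)" "continuous_on Dom (L i)" "continuous_on Dom (R i)"
    "continuous_on Dom (pd (e i) (F i))" for i
    unfolding L_def R_def
    by (intro continuous_intros C1_on_continuous_on_pd C1_on_continuous_on C\<Phi> CW CF)+
  have cont: "continuous_on UNIV (F i)" "continuous_on UNIV (L i)" "continuous_on UNIV (R i)"
    "continuous_on UNIV (pd (e i) (F i))" for i
    using continuous_on_UNIV_vanishing_outside[OF open_Dom cont_Dom(1) K outside(1)]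
      continuous_on_UNIV_vanishing_outside[OF open_Dom cont_Dom(2) K outside(2)]
      continuous_on_UNIV_vanishing_outside[OF open_Dom cont_Dom(3) K outside(3)]
      continuous_on_UNIV_vanishing_outside[OF open_Dom cont_Dom(4) K pd_eq_0_outside[OF K(1) outside(1)]]
    by blast+
  have int: "integrable lborel (\<lambda>x. L i (s, t, x))" "integrable lborel (\<lambda>x. R i (s, t, x))" for i
    using notK outside
    by (blast intro: xint_continuous_vanishing_outside_cbox(1)[of _ a b] cont)+
  have int0: "integral\<^sup>L lborel (\<lambda>x. pd (e i) (F i) (s, t, x)) = 0" for i
  proof (rule lborel_integral_directional_derivative_eq_0[where u="axis i 1" and a=a and b=b])
    show "((\<lambda>h. F i (s, t, x + h *\<^sub>R axis i 1)) has_real_derivative pd (e i) (F i) (s, t, x)) (at 0)" for x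
      using pd_has_real_derivative[OF C1_on_differentiable[OF CF], where p="(s, t, x)" and v="e i"] st
      by (simp add: e_def)
    show "continuous_on UNIV (\<lambda>x. F i (s, t, x))" "continuous_on UNIV (\<lambda>x. pd (e i) (F i) (s, t, x))"
      by (rule continuous_on_compose2[OF cont(1)] continuous_on_compose2[OF cont(4)];
          auto intro!: continuous_intros)+
    show "F i (s, t, x) = 0" "pd (e i) (F i) (s, t, x) = 0" if "x \<notin> cbox a b" for x
      using outside notK[OF that] pd_eq_0_outside[OF K(1)] by blast+
  qed (simp add: e_def)
  have "xint (\<lambda>p. \<Phi> p * divg W p) s t + xint (\<lambda>p. grad \<Phi> p \<bullet> W p) s t
      = (\<Sum>i\<in>UNIV. integral\<^sup>L lborel (\<lambda>x. R i (s, t, x))) + (\<Sum>i\<in>UNIV. integral\<^sup>L lborel (\<lambda>x. L i (s, t, x)))"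
    unfolding xint_def
    by (simp add: divg_def grad_def inner_vec_def e_def L_def R_def sum_distrib_left
        Bochner_Integration.integral_sum int[unfolded L_def R_def e_def])
  also have "\<dots> = (\<Sum>i\<in>UNIV. integral\<^sup>L lborel (\<lambda>x. pd (e i) (F i) (s, t, x)))"
    using st by (simp add: sum.distrib[symmetric] pdF int add.commute)
  also have "\<dots> = 0"
    by (simp add: int0)
  finally show ?thesis .
qed

lemma G_commute: "G f g \<rho> s t = G g f \<rho> s t"
  unfolding G_def by (simp add: inner_commute)

lemma Bcost_commute: "Bcost \<Psi>s \<Psi>t \<rho> s t = Bcost \<Psi>t \<Psi>s \<rho> s t"
  unfolding Bcost_def by (simp add: G_commute[of \<Psi>s \<Psi>t] mult.commute)

lemma Bcost_squared:
  assumes "Bcost \<Psi>s \<Psi>t \<rho> s t > 0"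
  shows "(Bcost \<Psi>s \<Psi>t \<rho> s t)\<^sup>2 = G \<Psi>s \<Psi>s \<rho> s t * G \<Psi>t \<Psi>t \<rho> s t - (G \<Psi>s \<Psi>t \<rho> s t)\<^sup>2"
  using assms unfolding Bcost_def by (cases "G \<Psi>s \<Psi>s \<rho> s t * G \<Psi>t \<Psi>t \<rho> s t - (G \<Psi>s \<Psi>t \<rho> s t)\<^sup>2 > 0") auto

section \<open>First variation of integrals over the unit square\<close>

abbreviation open_square :: "(real \<times> real) set" where
  "open_square \<equiv> {0<..<1} \<times> {0<..<1}"

lemma iterated_integral_cong_open_square:
  fixes F F' :: "real \<Rightarrow> real \<Rightarrow> real"
  assumes "\<And>s t. s \<in> {0<..<1} \<Longrightarrow> t \<in> {0<..<1} \<Longrightarrow> F s t = F' s t"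
  shows "(LINT s:{0..1}|lborel. LINT t:{0..1}|lborel. F s t)
       = (LINT s:{0..1}|lborel. LINT t:{0..1}|lborel. F' s t)"
proof -
  have ends: "(LINT t:{0..1}|lborel. f t) = (LINT t:{0<..<1}|lborel. f t)" for f :: "real \<Rightarrow> real"
    by (rule set_integral_discrete_difference[where X="{0, 1}"]) auto
  show ?thesis
    unfolding ends by (intro set_lebesgue_integral_cong allI impI assms) auto
qed

lemma iterated_set_integral_Times:
  fixes f :: "real \<times> real \<Rightarrow> real"
  assumes "set_integrable lborel (A \<times> B) f"
  shows "(LINT s:A|lborel. LINT t:B|lborel. f (s, t)) = (LINT z:A \<times> B|lborel. f z)"
proof -
  have "integrable (lborel \<Otimes>\<^sub>M lborel) (\<lambda>z. indicator (A \<times> B) z *\<^sub>R f z)"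
    using assms by (simp add: set_integrable_def lborel_prod)
  from lborel_pair.integral_fst'[OF this] show ?thesis
    by (simp add: set_lebesgue_integral_def lborel_prod indicator_times mult.assoc)
qed

lemma has_real_derivative_quadratic_remainder:
  fixes L :: "real \<Rightarrow> real"
  assumes "\<delta> > 0" and remainder: "\<And>e. \<bar>e\<bar> \<le> \<delta> \<Longrightarrow> \<bar>L e - L 0 - e * D\<bar> \<le> M * e\<^sup>2"
  shows "(L has_real_derivative D) (at 0)"
proof -
  have "\<forall>\<^sub>F e in at 0. norm ((L e - L 0) / e - D) \<le> M * \<bar>e\<bar>"
    unfolding eventually_at
  proof (intro exI[of _ \<delta>] conjI ballI impI)
    fix e :: real
    assume "e \<noteq> 0 \<and> dist e 0 < \<delta>"
    then have e: "e \<noteq> 0" "\<bar>e\<bar> \<le> \<delta>"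
      by auto
    have "norm ((L e - L 0) / e - D) = \<bar>L e - L 0 - e * D\<bar> / \<bar>e\<bar>"
      using e(1) by (simp add: field_simps)
    also have "\<dots> \<le> M * e\<^sup>2 / \<bar>e\<bar>"
      by (rule divide_right_mono[OF remainder[OF e(2)]]) simp
    also have "\<dots> = M * \<bar>e\<bar>"
      using e(1) by (simp add: power2_eq_square field_simps)
    finally show "norm ((L e - L 0) / e - D) \<le> M * \<bar>e\<bar>" .
  qed (rule assms(1))
  moreover have "((\<lambda>e. M * \<bar>e\<bar>) \<longlongrightarrow> 0) (at 0)"
    by (rule tendsto_eq_intros tendsto_ident_at | simp)+
  ultimately have "((\<lambda>e. (L e - L 0) / e - D) \<longlongrightarrow> 0) (at 0)"
    by (rule Lim_null_comparison)
  then have "((\<lambda>e. ((L e - L 0) / e - D) + D) \<longlongrightarrow> 0 + D) (at 0)"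
    by (intro tendsto_add tendsto_const)
  then have "((\<lambda>e. (L e - L 0) / (e - 0)) \<longlongrightarrow> D) (at 0)"
    by simp
  then show ?thesis
    by (simp add: has_field_derivative_iff)
qed

lemma sqrt_linearization_error:
  fixes B u :: real
  assumes "B > 0" "B\<^sup>2 + u \<ge> 0"
  shows "\<bar>sqrt (B\<^sup>2 + u) - B - u / (2 * B)\<bar> \<le> u\<^sup>2 / (2 * B ^ 3)"
proof -
  define r where "r = sqrt (B\<^sup>2 + u)"
  have r: "r \<ge> 0" "u = r\<^sup>2 - B\<^sup>2"
    using assms(2) by (simp_all add: r_def)
  have "\<bar>r - B\<bar> * B \<le> \<bar>r - B\<bar> * (r + B)"
    using r(1) by (intro mult_left_mono) auto
  also have "\<dots> = \<bar>(r - B) * (r + B)\<bar>"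
    using r(1) assms(1) by (simp add: abs_mult)
  also have "\<dots> = \<bar>u\<bar>"
    unfolding r(2) by (simp add: power2_eq_square algebra_simps)
  finally have "\<bar>r - B\<bar> \<le> \<bar>u\<bar> / B"
    using assms(1) by (simp add: field_simps)
  then have "(r - B)\<^sup>2 \<le> (\<bar>u\<bar> / B)\<^sup>2"
    by (metis abs_ge_zero power2_abs power_mono)
  have "r - B - u / (2 * B) = - ((r - B)\<^sup>2 / (2 * B))"
    unfolding r(2) using assms(1) by (simp add: field_simps power2_eq_square)
  then have "\<bar>r - B - u / (2 * B)\<bar> = (r - B)\<^sup>2 / (2 * B)"
    using assms(1) by simp
  also have "\<dots> \<le> (\<bar>u\<bar> / B)\<^sup>2 / (2 * B)"
    using assms(1) \<open>(r - B)\<^sup>2 \<le> (\<bar>u\<bar> / B)\<^sup>2\<close> by (simp add: divide_right_mono)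
  also have "\<dots> = u\<^sup>2 / (2 * B ^ 3)"
    by (simp add: power_divide power3_eq_cube power2_eq_square)
  finally show ?thesis
    unfolding r_def .
qed

lemma sqrt_expansion_bound:
  fixes B c A e a b :: real
  assumes c: "c > 0" "B \<ge> c" and ab: "\<bar>a\<bar> \<le> A" "\<bar>b\<bar> \<le> A"
    and e: "\<bar>e\<bar> \<le> 1" "\<bar>e\<bar> * (2 * A) \<le> c\<^sup>2 / 2"
  shows "\<bar>sqrt (B\<^sup>2 + e * a + e\<^sup>2 * b) - B - e * a / (2 * B)\<bar> \<le> (2 * A\<^sup>2 / c ^ 3 + A / (2 * c)) * e\<^sup>2"
proof -
  define u where "u = e * a + e\<^sup>2 * b"
  have B: "B > 0"
    using c by linarith
  have "\<bar>e\<^sup>2 * b\<bar> = \<bar>e\<bar> * (\<bar>e\<bar> * \<bar>b\<bar>)"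
    by (simp add: abs_mult power2_eq_square)
  also have "\<dots> \<le> \<bar>e\<bar> * (1 * A)"
    by (intro mult_left_mono mult_mono) (use e(1) ab(2) in auto)
  finally have "\<bar>e\<^sup>2 * b\<bar> \<le> \<bar>e\<bar> * A"
    by simp
  moreover have "\<bar>e * a\<bar> \<le> \<bar>e\<bar> * A"
    by (simp add: abs_mult mult_left_mono ab(1))
  ultimately have u: "\<bar>u\<bar> \<le> 2 * A * \<bar>e\<bar>"
    unfolding u_def using abs_triangle_ineq[of "e * a" "e\<^sup>2 * b"] by (simp add: algebra_simps)
  have "c\<^sup>2 \<le> B\<^sup>2"
    using c by (simp add: power_mono)
  then have pos: "B\<^sup>2 + u \<ge> 0"
    using u e(2) by (simp add: algebra_simps abs_le_iff)
  have "\<bar>sqrt (B\<^sup>2 + u) - B - u / (2 * B)\<bar> \<le> u\<^sup>2 / (2 * B ^ 3)"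
    by (rule sqrt_linearization_error[OF B pos])
  also have "\<dots> \<le> (2 * A * \<bar>e\<bar>)\<^sup>2 / (2 * c ^ 3)"
  proof (rule frac_le)
    have "\<bar>u\<bar> \<le> \<bar>2 * A * \<bar>e\<bar>\<bar>"
      using u by linarith
    then show "u\<^sup>2 \<le> (2 * A * \<bar>e\<bar>)\<^sup>2"
      by (simp only: abs_le_square_iff)
    show "2 * c ^ 3 \<le> 2 * B ^ 3"
      using c by (simp add: power_mono)
  qed (use c in auto)
  also have "\<dots> = 2 * A\<^sup>2 / c ^ 3 * e\<^sup>2"
    using c by (simp add: field_simps power2_eq_square)
  finally have lin: "\<bar>sqrt (B\<^sup>2 + u) - B - u / (2 * B)\<bar> \<le> 2 * A\<^sup>2 / c ^ 3 * e\<^sup>2" .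
  have quad: "\<bar>e\<^sup>2 * b / (2 * B)\<bar> \<le> A / (2 * c) * e\<^sup>2"
  proof -
    have "\<bar>e\<^sup>2 * b / (2 * B)\<bar> = e\<^sup>2 * \<bar>b\<bar> / (2 * B)"
      using B by (simp add: abs_mult)
    also have "\<dots> \<le> e\<^sup>2 * A / (2 * c)"
      using B c ab(2) by (intro frac_le mult_left_mono) auto
    finally show ?thesis
      by (simp add: mult.commute)
  qed
  have "sqrt (B\<^sup>2 + e * a + e\<^sup>2 * b) - B - e * a / (2 * B) = (sqrt (B\<^sup>2 + u) - B - u / (2 * B)) + e\<^sup>2 * b / (2 * B)"
    unfolding u_def using B by (simp add: field_simps add.assoc)
  with lin quad abs_triangle_ineq[of "sqrt (B\<^sup>2 + u) - B - u / (2 * B)" "e\<^sup>2 * b / (2 * B)"]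
  show ?thesis
    by (simp add: algebra_simps)
qed

lemma sqrt_expansion_uniform_on_compact:
  fixes B a b :: "'a::topological_space \<Rightarrow> real"
  assumes K: "compact K" and cont: "continuous_on K B" "continuous_on K a" "continuous_on K b"
    and B_pos: "\<And>z. z \<in> K \<Longrightarrow> B z > 0"
  obtains \<delta> M where "\<delta> > 0" "M \<ge> 0"
    "\<And>e z. \<bar>e\<bar> \<le> \<delta> \<Longrightarrow> z \<in> K \<Longrightarrow>
       \<bar>sqrt ((B z)\<^sup>2 + e * a z + e\<^sup>2 * b z) - B z - e * a z / (2 * B z)\<bar> \<le> M * e\<^sup>2"
proof -
  obtain c A where c: "c > 0" and A: "A \<ge> 0"
    and cK: "\<And>z. z \<in> K \<Longrightarrow> B z \<ge> c" and AK: "\<And>z. z \<in> K \<Longrightarrow> \<bar>a z\<bar> \<le> A \<and> \<bar>b z\<bar> \<le> A"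
  proof (cases "K = {}")
    case True
    then show ?thesis
      using that[of 1 0] by auto
  next
    case False
    obtain z0 where z0: "z0 \<in> K" "\<And>z. z \<in> K \<Longrightarrow> B z0 \<le> B z"
      using continuous_attains_inf[OF K False cont(1)] by blast
    have "continuous_on K (\<lambda>z. \<bar>a z\<bar> + \<bar>b z\<bar>)"
      by (intro continuous_intros cont)
    then obtain z1 where z1: "\<And>z. z \<in> K \<Longrightarrow> \<bar>a z\<bar> + \<bar>b z\<bar> \<le> \<bar>a z1\<bar> + \<bar>b z1\<bar>"
      using continuous_attains_sup[OF K False] by blast
    show ?thesis
      by (rule that[of "B z0" "\<bar>a z1\<bar> + \<bar>b z1\<bar>"]) (use B_pos z0 z1 in \<open>force+\<close>)
  qed
  define \<delta> where "\<delta> = min 1 (c\<^sup>2 / (4 * (A + 1)))"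
  show ?thesis
  proof (rule that[of \<delta> "2 * A\<^sup>2 / c ^ 3 + A / (2 * c)"])
    show "\<delta> > 0" "2 * A\<^sup>2 / c ^ 3 + A / (2 * c) \<ge> 0"
      using c A by (simp_all add: \<delta>_def)
    fix e z
    assume e: "\<bar>e\<bar> \<le> \<delta>" and z: "z \<in> K"
    have "\<bar>e\<bar> * (2 * A) \<le> c\<^sup>2 / (4 * (A + 1)) * (2 * A)"
      using e A by (intro mult_right_mono) (auto simp: \<delta>_def)
    also have "\<dots> = c\<^sup>2 / 2 * (A / (A + 1))"
      using A by (simp add: field_simps)
    also have "\<dots> \<le> c\<^sup>2 / 2"
      using A by (intro mult_left_le) auto
    finally show "\<bar>sqrt ((B z)\<^sup>2 + e * a z + e\<^sup>2 * b z) - B z - e * a z / (2 * B z)\<bar>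
        \<le> (2 * A\<^sup>2 / c ^ 3 + A / (2 * c)) * e\<^sup>2"
      using e AK[OF z] by (intro sqrt_expansion_bound c cK z) (auto simp: \<delta>_def)
  qed
qed

lemma first_variation_iterated_integral:
  fixes F :: "real \<Rightarrow> real \<Rightarrow> real \<Rightarrow> real" and B d :: "real \<times> real \<Rightarrow> real"
    and g :: "real \<Rightarrow> real \<times> real \<Rightarrow> real"
  assumes B: "set_integrable lborel ({0..1} \<times> {0..1}) B"
    and F: "\<And>e s t. s \<in> {0<..<1} \<Longrightarrow> t \<in> {0<..<1} \<Longrightarrow> F e s t = B (s, t) + g e (s, t)"
    and g: "\<And>e. continuous_on (cbox (0, 0) (1, 1)) (g e)" and d: "continuous_on (cbox (0, 0) (1, 1)) d"
    and "\<delta> > 0"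
    and remainder: "\<And>e z. \<bar>e\<bar> \<le> \<delta> \<Longrightarrow> z \<in> cbox (0, 0) (1, 1) \<Longrightarrow> \<bar>g e z - e * d z\<bar> \<le> M * e\<^sup>2"
  shows "((\<lambda>e. LINT s:{0..1}|lborel. LINT t:{0..1}|lborel. F e s t)
           has_real_derivative integral (cbox (0, 0) (1, 1)) d) (at 0)"
proof -
  define Q where "Q = cbox (0::real, 0::real) (1, 1)"
  have Q: "{0..1} \<times> {0..1} = Q"
    by (simp add: Q_def cbox_Pair_eq)
  have g_int: "set_integrable lborel Q (g e)" for e
    unfolding set_integrable_def Q_def by (rule borel_integrable_compact) (use g in auto)
  have L: "(LINT s:{0..1}|lborel. LINT t:{0..1}|lborel. F e s t) = (LINT z:Q|lborel. B z) + integral Q (g e)"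
    for e
  proof -
    have "(LINT s:{0..1}|lborel. LINT t:{0..1}|lborel. F e s t)
        = (LINT s:{0..1}|lborel. LINT t:{0..1}|lborel. B (s, t) + g e (s, t))"
      by (rule iterated_integral_cong_open_square) (rule F)
    also have "\<dots> = (LINT z:Q|lborel. B z + g e z)"
      using iterated_set_integral_Times[of "{0..1}" "{0..1}" "\<lambda>z. B z + g e z"] B g_int
      by (simp add: Q)
    also have "\<dots> = (LINT z:Q|lborel. B z) + integral Q (g e)"
      using B g_int by (simp add: Q set_borel_integral_eq_integral(2))
    finally show ?thesis .
  qed
  have "g 0 z = 0" if "z \<in> Q" for z
    using remainder[of 0 z] that \<open>\<delta> > 0\<close> by (simp add: Q_def)
  then have g0: "integral Q (g 0) = 0"
    by (simp add: integral_cong[of Q "g 0" "\<lambda>_. 0"])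
  show ?thesis
  proof (rule has_real_derivative_quadratic_remainder[OF \<open>\<delta> > 0\<close>])
    fix e :: real
    assume e: "\<bar>e\<bar> \<le> \<delta>"
    have "(0, 0) \<in> Q"
      using Q[symmetric] by auto
    then have "0 \<le> M * e\<^sup>2"
      using remainder[OF e, of "(0, 0)"] unfolding Q_def by linarith
    moreover have "((\<lambda>z. g e z - e * d z) has_integral integral Q (g e) - e * integral Q d) Q"
      using g_int d unfolding Q_def
      by (intro has_integral_diff has_integral_mult_right integrable_integral
          set_borel_integral_eq_integral(1) integrable_continuous)
    ultimately have "norm (integral Q (g e) - e * integral Q d) \<le> M * e\<^sup>2 * Henstock_Kurzweil_Integration.content Q"
      unfolding Q_def by (rule has_integral_bound) (use remainder[OF e] in auto)
    then show "\<bar>(LINT s:{0..1}|lborel. LINT t:{0..1}|lborel. F e s t)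
        - (LINT s:{0..1}|lborel. LINT t:{0..1}|lborel. F 0 s t) - e * integral (cbox (0, 0) (1, 1)) d\<bar>
        \<le> M * e\<^sup>2"
      using g0 by (simp add: L Q_def content_Pair)
  qed
qed

lemma first_variation_sqrt_integrand:
  fixes F :: "real \<Rightarrow> real \<Rightarrow> real \<Rightarrow> real" and B a b c :: "real \<times> real \<Rightarrow> real"
  assumes B_int: "set_integrable lborel ({0..1} \<times> {0..1}) B"
    and B_pos: "\<And>z. z \<in> open_square \<Longrightarrow> B z > 0"
    and cont: "continuous_on open_square B" "continuous_on open_square a"
      "continuous_on open_square b" "continuous_on open_square c"
    and K: "compact K" "K \<subseteq> open_square"
    and vanish: "\<And>z. z \<in> open_square \<Longrightarrow> z \<notin> K \<Longrightarrow> a z = 0 \<and> b z = 0 \<and> c z = 0"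
    and F: "\<And>e s t. s \<in> {0<..<1} \<Longrightarrow> t \<in> {0<..<1} \<Longrightarrow>
      F e s t = sqrt ((B (s, t))\<^sup>2 + e * a (s, t) + e\<^sup>2 * b (s, t)) + e * c (s, t)"
  shows "((\<lambda>e. LINT s:{0..1}|lborel. LINT t:{0..1}|lborel. F e s t) has_real_derivative
           integral (cbox (0, 0) (1, 1)) (\<lambda>z. if z \<in> open_square then a z / (2 * B z) + c z else 0)) (at 0)"
proof -
  define g where "g e z = (if z \<in> open_square
    then sqrt ((B z)\<^sup>2 + e * a z + e\<^sup>2 * b z) - B z + e * c z else 0)" for e z
  define d where "d z = (if z \<in> open_square then a z / (2 * B z) + c z else 0)" for z
  have outside: "g e z = 0" "d z = 0" if "z \<notin> K" for e z
    using vanish[of z] B_pos[of z] that by (auto simp: g_def d_def)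
  have "open open_square"
    by (intro open_Times) auto
  have "continuous_on open_square (\<lambda>z. sqrt ((B z)\<^sup>2 + e * a z + e\<^sup>2 * b z) - B z + e * c z)"
    "continuous_on open_square (\<lambda>z. a z / (2 * B z) + c z)" for e
    using B_pos by (intro continuous_intros cont ballI; force)+
  then have "continuous_on open_square (g e)" "continuous_on open_square d" for e
    by (auto simp: g_def d_def cong: continuous_on_cong)
  then have cont_UNIV: "continuous_on UNIV (g e)" "continuous_on UNIV d" for e
    by (auto intro!: continuous_on_UNIV_vanishing_outside[OF \<open>open open_square\<close> _ K] outside)
  obtain \<delta> M where "\<delta> > 0" "M \<ge> 0" and bound: "\<And>e z. \<bar>e\<bar> \<le> \<delta> \<Longrightarrow> z \<in> K \<Longrightarrow>
      \<bar>sqrt ((B z)\<^sup>2 + e * a z + e\<^sup>2 * b z) - B z - e * a z / (2 * B z)\<bar> \<le> M * e\<^sup>2"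
    by (rule sqrt_expansion_uniform_on_compact[OF K(1) continuous_on_subset[OF cont(1) K(2)]
          continuous_on_subset[OF cont(2) K(2)] continuous_on_subset[OF cont(3) K(2)]])
      (use B_pos K(2) in blast)+
  show ?thesis
    unfolding d_def[symmetric]
  proof (rule first_variation_iterated_integral[OF B_int _ _ _ \<open>\<delta> > 0\<close>, where g=g])
    show "F e s t = B (s, t) + g e (s, t)" if "s \<in> {0<..<1}" "t \<in> {0<..<1}" for e s t
      using that by (simp add: F g_def)
    show "continuous_on (cbox (0, 0) (1, 1)) (g e)" "continuous_on (cbox (0, 0) (1, 1)) d" for e
      using cont_UNIV by (auto intro: continuous_on_subset)
    show "\<bar>g e z - e * d z\<bar> \<le> M * e\<^sup>2" if "\<bar>e\<bar> \<le> \<delta>" for e z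
    proof (cases "z \<in> K")
      case True
      then have "g e z - e * d z = sqrt ((B z)\<^sup>2 + e * a z + e\<^sup>2 * b z) - B z - e * a z / (2 * B z)"
        using K(2) by (auto simp: g_def d_def algebra_simps)
      then show ?thesis
        using bound[OF that True] by simp
    qed (use outside \<open>M \<ge> 0\<close> in simp)
  qed
qed

lemma integral_param_derivative_vanishing_ends:
  fixes \<phi> \<phi>' :: "real \<Rightarrow> real^'n \<Rightarrow> real"
  assumes der: "\<And>u x. ((\<lambda>u. \<phi> u x) has_real_derivative \<phi>' u x) (at u)"
    and cont: "continuous_on UNIV (\<lambda>z. \<phi> (fst z) (snd z))" "continuous_on UNIV (\<lambda>z. \<phi>' (fst z) (snd z))"
    and ends: "\<And>x. \<phi> 0 x = 0" "\<And>x. \<phi> 1 x = 0"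
  shows "integral {0..1} (\<lambda>u. integral (cbox a b) (\<phi>' u)) = 0"
proof -
  define \<Psi> where "\<Psi> u = integral (cbox a b) (\<phi> u)" for u
  have "(\<Psi> has_field_derivative integral (cbox a b) (\<phi>' u)) (at u within UNIV)" for u
    unfolding \<Psi>_def
  proof (rule leibniz_rule_field_derivative[where fx=\<phi>'])
    show "\<phi> u integrable_on cbox a b" for u
    proof -
      have "continuous_on UNIV (\<lambda>x. \<phi> (fst (u, x)) (snd (u, x)))"
        by (rule continuous_on_compose2[OF cont(1)]) (auto intro!: continuous_intros)
      then show ?thesis
        by (auto intro: integrable_continuous continuous_on_subset)
    qed
    show "continuous_on (UNIV \<times> cbox a b) (\<lambda>(u, x). \<phi>' u x)"
      using cont(2) by (auto simp: case_prod_unfold intro: continuous_on_subset)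
  qed (use der in auto)
  then have "((\<lambda>u. integral (cbox a b) (\<phi>' u)) has_integral \<Psi> 1 - \<Psi> 0) {0..1}"
    by (intro fundamental_theorem_of_calculus)
      (auto simp: has_real_derivative_iff_has_vector_derivative[symmetric] intro: has_field_derivative_at_within)
  moreover have "\<phi> 1 = (\<lambda>x. 0)" "\<phi> 0 = (\<lambda>x. 0)"
    using ends by auto
  then have "\<Psi> 1 = 0" "\<Psi> 0 = 0"
    by (simp_all add: \<Psi>_def)
  ultimately show ?thesis
    by (simp add: integral_unique)
qed

section \<open>Test functions with compact support\<close>

text \<open>\<open>K\<close> is the support of a test function and \<open>cbox a b\<close> contains its projection to \<open>x\<close>, so
  every spatial integral below is a Henstock integral over one fixed box, where the theorems on
  integrals depending continuously or differentiably on parameters apply.\<close>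
locale support_box =
  fixes K :: "'n::finite pt set" and a b :: "real^'n"
  assumes compact_K: "compact K" and K_subset_Dom: "K \<subseteq> Dom"
    and K_box: "\<And>p. p \<in> K \<Longrightarrow> snd (snd p) \<in> cbox a b"
begin

definition cont_supported :: "('n pt \<Rightarrow> real) \<Rightarrow> bool" where
  "cont_supported h \<longleftrightarrow> continuous_on Dom h \<and> (\<forall>p. p \<notin> K \<longrightarrow> h p = 0)"

lemma notin_K_if_notin_box: "x \<notin> cbox a b \<Longrightarrow> (s, t, x) \<notin> K"
  using K_box by force

lemma cont_supported_continuous: "cont_supported h \<Longrightarrow> continuous_on UNIV h"
  unfolding cont_supported_def
  by (intro continuous_on_UNIV_vanishing_outside[OF open_Dom _ compact_K K_subset_Dom]) auto

lemma cont_supported_vanishing_outside_box: "cont_supported h \<Longrightarrow> x \<notin> cbox a b \<Longrightarrow> h (s, t, x) = 0"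
  unfolding cont_supported_def using notin_K_if_notin_box by blast

lemma cont_supported_integrable: "cont_supported h \<Longrightarrow> integrable lborel (\<lambda>x. h (s, t, x))"
  by (rule xint_continuous_vanishing_outside_cbox(1)[OF cont_supported_continuous])
    (auto intro: cont_supported_vanishing_outside_box)

lemma cont_supported_xint_continuous:
  "cont_supported h \<Longrightarrow> continuous_on UNIV (\<lambda>z. xint h (fst z) (snd z))"
  by (rule xint_continuous_vanishing_outside_cbox(3)[OF cont_supported_continuous])
    (auto intro: cont_supported_vanishing_outside_box)

lemma cont_supported_xint_eq_integral:
  "cont_supported h \<Longrightarrow> xint h s t = integral (cbox a b) (\<lambda>x. h (s, t, x))"
  by (rule xint_continuous_vanishing_outside_cbox(2)[OF cont_supported_continuous])
    (auto intro: cont_supported_vanishing_outside_box)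

lemma xint_eq_0_outside: "cont_supported h \<Longrightarrow> (\<And>x. (s, t, x) \<notin> K) \<Longrightarrow> xint h s t = 0"
  unfolding cont_supported_def xint_def by simp

lemma cont_supported_mult_left: "continuous_on Dom f \<Longrightarrow> cont_supported g \<Longrightarrow> cont_supported (\<lambda>p. f p * g p)"
  unfolding cont_supported_def by (auto intro!: continuous_intros)

lemma cont_supported_mult_right: "cont_supported f \<Longrightarrow> continuous_on Dom g \<Longrightarrow> cont_supported (\<lambda>p. f p * g p)"
  unfolding cont_supported_def by (auto intro!: continuous_intros)

lemma cont_supported_add: "cont_supported f \<Longrightarrow> cont_supported g \<Longrightarrow> cont_supported (\<lambda>p. f p + g p)"
  unfolding cont_supported_def by (auto intro!: continuous_intros)

lemma cont_supported_diff: "cont_supported f \<Longrightarrow> cont_supported g \<Longrightarrow> cont_supported (\<lambda>p. f p - g p)"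
  unfolding cont_supported_def by (auto intro!: continuous_intros)

lemma cont_supported_C1_on: "C1_on Dom f \<Longrightarrow> (\<And>p. p \<notin> K \<Longrightarrow> f p = 0) \<Longrightarrow> cont_supported f"
  unfolding cont_supported_def using C1_on_continuous_on by blast

lemma cont_supported_pd: "C1_on Dom f \<Longrightarrow> (\<And>p. p \<notin> K \<Longrightarrow> f p = 0) \<Longrightarrow> cont_supported (pd v f)"
  unfolding cont_supported_def using C1_on_continuous_on_pd pd_eq_0_outside[OF compact_K] by blast

lemma cont_supported_divg:
  "(\<And>i. C1_on Dom (\<lambda>q. V q $ i)) \<Longrightarrow> (\<And>p. p \<notin> K \<Longrightarrow> V p = 0) \<Longrightarrow> cont_supported (divg V)"
  unfolding cont_supported_def using continuous_on_divg divg_eq_0_outside[OF compact_K] by blast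

lemma cont_supported_inner_grad:
  "C2_on Dom f \<Longrightarrow> C2_on Dom \<eta> \<Longrightarrow> (\<And>p. p \<notin> K \<Longrightarrow> \<eta> p = 0) \<Longrightarrow> cont_supported (\<lambda>p. grad f p \<bullet> grad \<eta> p)"
  unfolding cont_supported_def
  using C1_on_continuous_on[OF C1_on_inner_grad] grad_eq_0_outside[OF compact_K] by auto

lemma cont_supported_inner_grad':
  "C2_on Dom f \<Longrightarrow> C2_on Dom \<eta> \<Longrightarrow> (\<And>p. p \<notin> K \<Longrightarrow> \<eta> p = 0) \<Longrightarrow> cont_supported (\<lambda>p. grad \<eta> p \<bullet> grad f p)"
  unfolding cont_supported_def
  using C1_on_continuous_on[OF C1_on_inner_grad] grad_eq_0_outside[OF compact_K] by auto

lemma xint_add_cont_supported: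
  "cont_supported f \<Longrightarrow> cont_supported g \<Longrightarrow> xint (\<lambda>p. f p + g p) s t = xint f s t + xint g s t"
  by (intro xint_add cont_supported_integrable)

lemma xint_diff_cont_supported:
  "cont_supported f \<Longrightarrow> cont_supported g \<Longrightarrow> xint (\<lambda>p. f p - g p) s t = xint f s t - xint g s t"
  by (intro xint_diff cont_supported_integrable)

lemma xint_divg_by_parts_K:
  assumes "s \<in> {0<..<1}" "t \<in> {0<..<1}" "C1_on Dom \<Phi>" "\<And>i. C1_on Dom (\<lambda>q. W q $ i)"
    and "(\<forall>p. p \<notin> K \<longrightarrow> \<Phi> p = 0) \<or> (\<forall>p. p \<notin> K \<longrightarrow> W p = 0)"
  shows "xint (\<lambda>p. \<Phi> p * divg W p) s t + xint (\<lambda>p. grad \<Phi> p \<bullet> W p) s t = 0"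
  by (rule xint_divg_by_parts[OF assms(1-4) compact_K K_subset_Dom K_box assms(5)])

text \<open>The \<open>\<Psi>\<close>-equation tested against \<open>\<eta>\<close>: three integrations by parts.\<close>
lemma Psi_equation_weak:
  fixes \<rho> \<Psi> \<Psi>' \<Phi> \<eta> :: "'n pt \<Rightarrow> real" and P R B :: real
  assumes st: "s \<in> {0<..<1}" "t \<in> {0<..<1}"
    and C\<rho>: "C1_on Dom \<rho>" and C\<Psi>: "C2_on Dom \<Psi>" "C2_on Dom \<Psi>'" "C2_on Dom \<Phi>" "C2_on Dom \<eta>"
    and \<eta>: "\<And>p. p \<notin> K \<Longrightarrow> \<eta> p = 0"
    and eq: "\<And>x. (1 / B) * divg (\<lambda>q. \<rho> q *\<^sub>R (P *\<^sub>R grad \<Psi> q - R *\<^sub>R grad \<Psi>' q)) (s, t, x)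
               = divg (\<lambda>q. \<rho> q *\<^sub>R grad \<Phi> q) (s, t, x)"
  shows "(P * G \<Psi> \<eta> \<rho> s t - R * G \<eta> \<Psi>' \<rho> s t) / B
       + xint (\<lambda>p. \<Phi> p * divg (\<lambda>q. \<rho> q *\<^sub>R grad \<eta> q) p) s t = 0"
proof -
  define W where "W = (\<lambda>q. \<rho> q *\<^sub>R (P *\<^sub>R grad \<Psi> q - R *\<^sub>R grad \<Psi>' q))"
  define X where "X = xint (\<lambda>p. \<eta> p * divg W p) s t"
  have CW: "C1_on Dom (\<lambda>q. W q $ i)" for i
    using C1_on_mult[OF C\<rho> C1_on_diff[OF C1_on_cmult C1_on_cmult, OF C1_on_grad C1_on_grad, OF C\<Psi>(1,2)]]
    by (simp add: W_def)
  have \<eta>': "\<forall>p. p \<notin> K \<longrightarrow> \<eta> p = 0" "\<forall>p. p \<notin> K \<longrightarrow> \<rho> p *\<^sub>R grad \<eta> p = 0"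
    using \<eta> grad_eq_0_outside[OF compact_K \<eta>] by auto
  have by_parts:
    "X + xint (\<lambda>p. grad \<eta> p \<bullet> W p) s t = 0"
    "xint (\<lambda>p. \<eta> p * divg (\<lambda>q. \<rho> q *\<^sub>R grad \<Phi> q) p) s t
      + xint (\<lambda>p. grad \<eta> p \<bullet> (\<rho> p *\<^sub>R grad \<Phi> p)) s t = 0"
    "xint (\<lambda>p. \<Phi> p * divg (\<lambda>q. \<rho> q *\<^sub>R grad \<eta> q) p) s t
      + xint (\<lambda>p. grad \<Phi> p \<bullet> (\<rho> p *\<^sub>R grad \<eta> p)) s t = 0"
    unfolding X_def
    by (rule xint_divg_by_parts_K[OF st C2_on_C1_on[OF C\<Psi>(4)] CW disjI1[OF \<eta>'(1)]],
        rule xint_divg_by_parts_K[OF st C2_on_C1_on[OF C\<Psi>(4)] C1_on_scaleR_grad[OF C\<rho> C\<Psi>(3)]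
          disjI1[OF \<eta>'(1)]],
        rule xint_divg_by_parts_K[OF st C2_on_C1_on[OF C\<Psi>(3)] C1_on_scaleR_grad[OF C\<rho> C\<Psi>(4)]
          disjI2[OF \<eta>'(2)]])
  have "xint (\<lambda>p. \<eta> p * divg (\<lambda>q. \<rho> q *\<^sub>R grad \<Phi> q) p) s t = (1 / B) * X"
    unfolding X_def xint_cmult[symmetric] by (rule xint_cong) (simp add: eq[symmetric] W_def)
  moreover have "xint (\<lambda>p. grad \<eta> p \<bullet> (\<rho> p *\<^sub>R grad \<Phi> p)) s t = xint (\<lambda>p. grad \<Phi> p \<bullet> (\<rho> p *\<^sub>R grad \<eta> p)) s t"
    by (rule xint_cong) (simp add: inner_commute)
  ultimately have \<Phi>_term: "xint (\<lambda>p. \<Phi> p * divg (\<lambda>q. \<rho> q *\<^sub>R grad \<eta> q) p) s t = (1 / B) * X"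
    using by_parts(2,3) by linarith
  have "xint (\<lambda>p. grad \<eta> p \<bullet> W p) s t = xint (\<lambda>p. P * ((grad \<Psi> p \<bullet> grad \<eta> p) * \<rho> p)
       - R * ((grad \<eta> p \<bullet> grad \<Psi>' p) * \<rho> p)) s t"
    by (rule xint_cong) (simp add: W_def inner_diff_right inner_commute algebra_simps)
  also have "\<dots> = P * xint (\<lambda>p. (grad \<Psi> p \<bullet> grad \<eta> p) * \<rho> p) s t
       - R * xint (\<lambda>p. (grad \<eta> p \<bullet> grad \<Psi>' p) * \<rho> p) s t"
    by (simp add: xint_diff_cont_supported cont_supported_mult_left cont_supported_mult_right
        cont_supported_inner_grad cont_supported_inner_grad' C1_on_continuous_on C\<rho> C\<Psi> \<eta> xint_cmult)
  finally show ?thesis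
    using by_parts(1) \<Phi>_term by (simp add: G_def divide_simps)
qed

lemma xint_rho_equation_tested:
  fixes \<Psi>s \<Psi>t \<Phi>s \<Phi>t \<eta> :: "'n pt \<Rightarrow> real" and B Gss Gtt Gst :: real
  assumes C: "C2_on Dom \<Psi>s" "C2_on Dom \<Psi>t" "C2_on Dom \<eta>" and \<eta>: "\<And>p. p \<notin> K \<Longrightarrow> \<eta> p = 0"
    and eq: "\<And>x. dS \<Phi>s (s, t, x) + dT \<Phi>t (s, t, x) + grad \<Phi>s (s, t, x) \<bullet> grad \<Psi>s (s, t, x)
        + grad \<Phi>t (s, t, x) \<bullet> grad \<Psi>t (s, t, x)
        - (1 / B) * ((1/2) * (grad \<Psi>s (s, t, x) \<bullet> grad \<Psi>s (s, t, x)) * Gtt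
           + (1/2) * (grad \<Psi>t (s, t, x) \<bullet> grad \<Psi>t (s, t, x)) * Gss
           - (grad \<Psi>t (s, t, x) \<bullet> grad \<Psi>s (s, t, x)) * Gst) = 0"
  shows "xint (\<lambda>p. (dS \<Phi>s p + dT \<Phi>t p + grad \<Phi>s p \<bullet> grad \<Psi>s p + grad \<Phi>t p \<bullet> grad \<Psi>t p) * \<eta> p) s t
    = (G \<Psi>s \<Psi>s \<eta> s t * Gtt + Gss * G \<Psi>t \<Psi>t \<eta> s t - 2 * Gst * G \<Psi>s \<Psi>t \<eta> s t) / (2 * B)"
proof -
  define T where "T f g p = (grad f p \<bullet> grad g p) * \<eta> p" for f g p
  have cs_T: "cont_supported (T f g)" if "C2_on Dom f" "C2_on Dom g" for f g
    unfolding T_def[abs_def]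
    by (intro cont_supported_mult_left cont_supported_C1_on C2_on_C1_on C(3) \<eta> C1_on_continuous_on
        C1_on_inner_grad that)
  have scale: "(1 / B) * ((1/2) * X * Gtt + (1/2) * Y * Gss - Z * Gst) * e
      = Gtt / (2 * B) * (X * e) + Gss / (2 * B) * (Y * e) - Gst / B * (Z * e)"
    "(X * Gtt + Gss * Y - 2 * Gst * Z) / (2 * B) = Gtt / (2 * B) * X + Gss / (2 * B) * Y - Gst / B * Z"
    for X Y Z e :: real
    by (cases "B = 0"; simp add: field_simps)+
  have "(dS \<Phi>s (s, t, x) + dT \<Phi>t (s, t, x) + grad \<Phi>s (s, t, x) \<bullet> grad \<Psi>s (s, t, x)
      + grad \<Phi>t (s, t, x) \<bullet> grad \<Psi>t (s, t, x)) * \<eta> (s, t, x)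
    = Gtt / (2 * B) * T \<Psi>s \<Psi>s (s, t, x) + Gss / (2 * B) * T \<Psi>t \<Psi>t (s, t, x)
      - Gst / B * T \<Psi>s \<Psi>t (s, t, x)" for x
  proof -
    have "dS \<Phi>s (s, t, x) + dT \<Phi>t (s, t, x) + grad \<Phi>s (s, t, x) \<bullet> grad \<Psi>s (s, t, x)
        + grad \<Phi>t (s, t, x) \<bullet> grad \<Psi>t (s, t, x)
        = (1 / B) * ((1/2) * (grad \<Psi>s (s, t, x) \<bullet> grad \<Psi>s (s, t, x)) * Gtt
           + (1/2) * (grad \<Psi>t (s, t, x) \<bullet> grad \<Psi>t (s, t, x)) * Gss
           - (grad \<Psi>s (s, t, x) \<bullet> grad \<Psi>t (s, t, x)) * Gst)"
      using eq[of x] by (simp add: inner_commute)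
    then show ?thesis
      by (simp only: T_def scale(1))
  qed
  then have "xint (\<lambda>p. (dS \<Phi>s p + dT \<Phi>t p + grad \<Phi>s p \<bullet> grad \<Psi>s p + grad \<Phi>t p \<bullet> grad \<Psi>t p) * \<eta> p) s t
      = xint (\<lambda>p. Gtt / (2 * B) * T \<Psi>s \<Psi>s p + Gss / (2 * B) * T \<Psi>t \<Psi>t p - Gst / B * T \<Psi>s \<Psi>t p) s t"
    by (rule xint_cong)
  also have "\<dots> = Gtt / (2 * B) * xint (T \<Psi>s \<Psi>s) s t + Gss / (2 * B) * xint (T \<Psi>t \<Psi>t) s t
      - Gst / B * xint (T \<Psi>s \<Psi>t) s t"
    using C by (simp only: xint_diff_cont_supported xint_add_cont_supported xint_cmult
        cont_supported_add cont_supported_mult_left cs_T continuous_on_const)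
  finally show ?thesis
    unfolding scale(2) T_def G_def .
qed

text \<open>The \<open>\<rho>\<close>-equation tested against \<open>\<eta>\<close>: the product rule for \<open>\<partial>\<^sub>s(\<Phi>\<^sub>s\<eta>) + \<partial>\<^sub>t(\<Phi>\<^sub>t\<eta>)\<close>,
  then the equation for \<open>\<partial>\<^sub>s\<Phi>\<^sub>s + \<partial>\<^sub>t\<Phi>\<^sub>t\<close>, then integration by parts of \<open>\<nabla>\<Phi> \<cdot> \<eta>\<nabla>\<Psi>\<close>.\<close>
lemma rho_equation_weak:
  fixes \<Psi>s \<Psi>t \<Phi>s \<Phi>t \<eta> :: "'n pt \<Rightarrow> real" and B Gss Gtt Gst :: real
  assumes st: "s \<in> {0<..<1}" "t \<in> {0<..<1}"
    and C: "C2_on Dom \<Psi>s" "C2_on Dom \<Psi>t" "C2_on Dom \<Phi>s" "C2_on Dom \<Phi>t" "C2_on Dom \<eta>"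
    and \<eta>: "\<And>p. p \<notin> K \<Longrightarrow> \<eta> p = 0"
    and eq: "\<And>x. dS \<Phi>s (s, t, x) + dT \<Phi>t (s, t, x) + grad \<Phi>s (s, t, x) \<bullet> grad \<Psi>s (s, t, x)
        + grad \<Phi>t (s, t, x) \<bullet> grad \<Psi>t (s, t, x)
        - (1 / B) * ((1/2) * (grad \<Psi>s (s, t, x) \<bullet> grad \<Psi>s (s, t, x)) * Gtt
           + (1/2) * (grad \<Psi>t (s, t, x) \<bullet> grad \<Psi>t (s, t, x)) * Gss
           - (grad \<Psi>t (s, t, x) \<bullet> grad \<Psi>s (s, t, x)) * Gst) = 0"
  shows "(G \<Psi>s \<Psi>s \<eta> s t * Gtt + Gss * G \<Psi>t \<Psi>t \<eta> s t - 2 * Gst * G \<Psi>s \<Psi>t \<eta> s t) / (2 * B)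
       + xint (\<lambda>p. \<Phi>s p * (dS \<eta> p + divg (\<lambda>q. \<eta> q *\<^sub>R grad \<Psi>s q) p)
                 + \<Phi>t p * (dT \<eta> p + divg (\<lambda>q. \<eta> q *\<^sub>R grad \<Psi>t q) p)) s t
       = xint (\<lambda>p. dS (\<lambda>q. \<Phi>s q * \<eta> q) p + dT (\<lambda>q. \<Phi>t q * \<eta> q) p) s t"
proof -
  define T where "T f g p = (grad f p \<bullet> grad g p) * \<eta> p" for f g p
  define D where "D \<Phi> \<Psi> p = \<Phi> p * divg (\<lambda>q. \<eta> q *\<^sub>R grad \<Psi> q) p" for \<Phi> \<Psi> p
  define c where "c p = \<Phi>s p * dS \<eta> p + \<Phi>t p * dT \<eta> p" for p
  define f where "f p = (dS \<Phi>s p + dT \<Phi>t p + grad \<Phi>s p \<bullet> grad \<Psi>s p + grad \<Phi>t p \<bullet> grad \<Psi>t p) * \<eta> p" for p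
  have C\<eta>: "C1_on Dom \<eta>"
    by (rule C2_on_C1_on[OF C(5)])
  have cs_\<eta>: "cont_supported \<eta>" "cont_supported (pd v \<eta>)" for v
    using C\<eta> \<eta> by (simp_all add: cont_supported_C1_on cont_supported_pd)
  have cs_T: "cont_supported (T f g)" if "C2_on Dom f" "C2_on Dom g" for f g
    unfolding T_def[abs_def]
    by (intro cont_supported_mult_left cs_\<eta> C1_on_continuous_on C1_on_inner_grad that)
  have C_scaled: "C1_on Dom (\<lambda>q. (\<eta> q *\<^sub>R grad \<Psi> q) $ i)" if "C2_on Dom \<Psi>" for \<Psi> i
    by (rule C1_on_scaleR_grad[OF C\<eta> that])
  have cs_D: "cont_supported (D \<Phi> \<Psi>)" if "C2_on Dom \<Phi>" "C2_on Dom \<Psi>" for \<Phi> \<Psi>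
    unfolding D_def[abs_def] using that
    by (intro cont_supported_mult_left cont_supported_divg C1_on_continuous_on C2_on_C1_on C_scaled)
      (auto simp: \<eta>)
  have cs_c: "cont_supported c"
    unfolding c_def[abs_def] dS_def dT_def
    by (intro cont_supported_add cont_supported_mult_left cs_\<eta> C1_on_continuous_on C2_on_C1_on C)
  have cs_f: "cont_supported f"
    unfolding f_def[abs_def] dS_def dT_def
    by (intro cont_supported_mult_left[OF _ cs_\<eta>(1)] continuous_intros C1_on_continuous_on_pd
        C1_on_continuous_on C1_on_inner_grad C2_on_C1_on C)
  have by_parts: "xint (D \<Phi> \<Psi>) s t + xint (T \<Phi> \<Psi>) s t = 0" if "C2_on Dom \<Phi>" "C2_on Dom \<Psi>" for \<Phi> \<Psi>
  proof -
    have "xint (D \<Phi> \<Psi>) s t + xint (\<lambda>p. grad \<Phi> p \<bullet> (\<eta> p *\<^sub>R grad \<Psi> p)) s t = 0"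
      unfolding D_def using \<eta>
      by (intro xint_divg_by_parts_K st C2_on_C1_on that C_scaled disjI2) auto
    then show ?thesis
      unfolding T_def by (simp add: xint_def mult.commute)
  qed
  have "dS (\<lambda>q. \<Phi>s q * \<eta> q) p + dT (\<lambda>q. \<Phi>t q * \<eta> q) p
      = c p + f p - T \<Phi>s \<Psi>s p - T \<Phi>t \<Psi>t p" if "p \<in> Dom" for p
  proof -
    have "\<Phi>s differentiable (at p)" "\<Phi>t differentiable (at p)" "\<eta> differentiable (at p)"
      using that C by (auto intro: C1_on_differentiable C2_on_C1_on)
    then show ?thesis
      unfolding c_def f_def D_def T_def dS_def dT_def by (simp add: pd_mult algebra_simps)
  qed
  then have "xint (\<lambda>p. dS (\<lambda>q. \<Phi>s q * \<eta> q) p + dT (\<lambda>q. \<Phi>t q * \<eta> q) p) s t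
      = xint (\<lambda>p. c p + f p - T \<Phi>s \<Psi>s p - T \<Phi>t \<Psi>t p) s t"
    using st by (intro xint_cong) simp
  also have "\<dots> = xint c s t + xint f s t - xint (T \<Phi>s \<Psi>s) s t - xint (T \<Phi>t \<Psi>t) s t"
    using C by (simp only: xint_diff_cont_supported xint_add_cont_supported cont_supported_add
        cont_supported_diff cs_c cs_f cs_T)
  moreover have "xint (\<lambda>p. \<Phi>s p * (dS \<eta> p + divg (\<lambda>q. \<eta> q *\<^sub>R grad \<Psi>s q) p)
                 + \<Phi>t p * (dT \<eta> p + divg (\<lambda>q. \<eta> q *\<^sub>R grad \<Psi>t q) p)) s t
      = xint (\<lambda>p. c p + D \<Phi>s \<Psi>s p + D \<Phi>t \<Psi>t p) s t"
    by (rule xint_cong) (simp add: c_def D_def algebra_simps)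
  moreover have "\<dots> = xint c s t + xint (D \<Phi>s \<Psi>s) s t + xint (D \<Phi>t \<Psi>t) s t"
    using C by (simp only: xint_add_cont_supported cont_supported_add cs_c cs_D)
  moreover have "xint f s t
    = (G \<Psi>s \<Psi>s \<eta> s t * Gtt + Gss * G \<Psi>t \<Psi>t \<eta> s t - 2 * Gst * G \<Psi>s \<Psi>t \<eta> s t) / (2 * B)"
    unfolding f_def[abs_def] by (rule xint_rho_equation_tested[OF C(1,2,5) \<eta> eq])
  ultimately show ?thesis
    using by_parts[OF C(3,1)] by_parts[OF C(4,2)] unfolding T_def by linarith
qed

lemma differentiable_vanishing_outside_K:
  assumes "C1_on Dom H" "\<And>p. p \<notin> K \<Longrightarrow> H p = 0"
  shows "H differentiable (at p)"
proof (cases "p \<in> Dom")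
  case True
  then show ?thesis
    using C1_on_differentiable[OF assms(1)] by blast
next
  case False
  then have "p \<in> - K"
    using K_subset_Dom by auto
  moreover have "open (- K)"
    using compact_K by (simp add: compact_imp_closed open_Compl)
  ultimately have "(H has_derivative (\<lambda>_. 0)) (at p)"
    using assms(2) by (intro has_derivative_transform_within_open[OF has_derivative_const]) auto
  then show ?thesis
    unfolding differentiable_def by blast
qed

lemma integral_segment_pd_eq_0:
  assumes CH: "C1_on Dom H" and H: "\<And>p. p \<notin> K \<Longrightarrow> H p = 0"
    and ends: "\<And>x. P 0 x \<notin> Dom" "\<And>x. P 1 x \<notin> Dom"
    and line: "\<And>u x. P u x = P 0 x + u *\<^sub>R v"
    and P_cont: "continuous_on UNIV (\<lambda>z. P (fst z) (snd z))"
  shows "integral {0..1} (\<lambda>u. integral (cbox a b) (\<lambda>x. pd v H (P u x))) = 0"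
proof (rule integral_param_derivative_vanishing_ends[where \<phi>="\<lambda>u x. H (P u x)"])
  show "((\<lambda>u. H (P u x)) has_real_derivative pd v H (P u x)) (at u)" for u x
    using pd_has_real_derivative_at[of H "P 0 x" u v, OF differentiable_vanishing_outside_K[OF CH H]]
    by (subst (1 2) line) simp
  show "continuous_on UNIV (\<lambda>z. H (P (fst z) (snd z)))"
    by (rule continuous_on_compose2[OF cont_supported_continuous[OF cont_supported_C1_on[OF CH H]] P_cont])
      auto
  show "continuous_on UNIV (\<lambda>z. pd v H (P (fst z) (snd z)))"
    by (rule continuous_on_compose2[OF cont_supported_continuous[OF cont_supported_pd[OF CH H]] P_cont])
      auto
  show "H (P 0 x) = 0" "H (P 1 x) = 0" for x
    using H ends K_subset_Dom by blast+
qed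

lemma integral_xint_dS_eq_0:
  assumes "C1_on Dom H" "\<And>p. p \<notin> K \<Longrightarrow> H p = 0"
  shows "integral (cbox (0, 0) (1, 1)) (\<lambda>z. xint (dS H) (fst z) (snd z)) = 0"
proof -
  have cs: "cont_supported (dS H)"
    unfolding dS_def[abs_def] by (rule cont_supported_pd[OF assms])
  have c: "continuous_on UNIV (\<lambda>z. xint (dS H) (fst z) (snd z))"
    by (rule cont_supported_xint_continuous[OF cs])
  have "integral (cbox (0, 0) (1, 1)) (\<lambda>z. xint (dS H) (fst z) (snd z))
      = integral (cbox 0 1) (\<lambda>s. integral (cbox 0 1) (\<lambda>t. xint (dS H) s t))"
    by (subst integral_prod_continuous) (auto intro: continuous_on_subset[OF c])
  also have "\<dots> = integral (cbox 0 1) (\<lambda>t. integral (cbox 0 1) (\<lambda>s. xint (dS H) s t))"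
    by (rule integral_swap_continuous) (auto simp: case_prod_unfold intro: continuous_on_subset[OF c])
  also have "\<dots> = integral (cbox 0 1) (\<lambda>t::real. 0)"
  proof (rule integral_cong)
    fix t :: real
    have "integral (cbox 0 1) (\<lambda>s. xint (dS H) s t)
        = integral {0..1} (\<lambda>u. integral (cbox a b) (\<lambda>x. pd (1, 0, 0) H (u, t, x)))"
      by (simp add: cont_supported_xint_eq_integral[OF cs] dS_def cbox_interval)
    also have "\<dots> = 0"
      by (rule integral_segment_pd_eq_0[OF assms, where P="\<lambda>u x. (u, t, x)"])
        (auto intro!: continuous_intros)
    finally show "integral (cbox 0 1) (\<lambda>s. xint (dS H) s t) = 0" .
  qed
  finally show ?thesis
    by simp
qed

lemma integral_xint_dT_eq_0:
  assumes "C1_on Dom H" "\<And>p. p \<notin> K \<Longrightarrow> H p = 0"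
  shows "integral (cbox (0, 0) (1, 1)) (\<lambda>z. xint (dT H) (fst z) (snd z)) = 0"
proof -
  have cs: "cont_supported (dT H)"
    unfolding dT_def[abs_def] by (rule cont_supported_pd[OF assms])
  have "integral (cbox (0, 0) (1, 1)) (\<lambda>z. xint (dT H) (fst z) (snd z))
      = integral (cbox 0 1) (\<lambda>s. integral (cbox 0 1) (\<lambda>t. xint (dT H) s t))"
    using cont_supported_xint_continuous[OF cs]
    by (subst integral_prod_continuous) (auto intro: continuous_on_subset)
  also have "\<dots> = integral (cbox 0 1) (\<lambda>s::real. 0)"
  proof (rule integral_cong)
    fix s :: real
    have "integral (cbox 0 1) (\<lambda>t. xint (dT H) s t)
        = integral {0..1} (\<lambda>u. integral (cbox a b) (\<lambda>x. pd (0, 1, 0) H (s, u, x)))"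
      by (simp add: cont_supported_xint_eq_integral[OF cs] dT_def cbox_interval)
    also have "\<dots> = 0"
      by (rule integral_segment_pd_eq_0[OF assms, where P="\<lambda>u x. (s, u, x)"])
        (auto intro!: continuous_intros)
    finally show "integral (cbox 0 1) (\<lambda>t. xint (dT H) s t) = 0" .
  qed
  finally show ?thesis
    by simp
qed


definition K_params :: "(real \<times> real) set" where
  "K_params = (\<lambda>p. (fst p, fst (snd p))) ` K"

lemma compact_K_params: "compact K_params"
  unfolding K_params_def by (rule compact_continuous_image[OF _ compact_K]) (auto intro!: continuous_intros)

lemma K_params_subset: "K_params \<subseteq> open_square"
  unfolding K_params_def using K_subset_Dom by (auto simp: Dom_def)

lemma notin_K_if_notin_K_params: "(s, t) \<notin> K_params \<Longrightarrow> (s, t, x) \<notin> K"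
  unfolding K_params_def by force

lemma xint_eq_0_outside_K_params: "cont_supported h \<Longrightarrow> (s, t) \<notin> K_params \<Longrightarrow> xint h s t = 0"
  by (rule xint_eq_0_outside) (use notin_K_if_notin_K_params in auto)

lemma xint_eq_0_outside_open_square: "cont_supported h \<Longrightarrow> (s, t) \<notin> open_square \<Longrightarrow> xint h s t = 0"
  using K_params_subset xint_eq_0_outside_K_params by blast

lemma cont_supported_inner_grad_mult:
  "C1_on Dom \<rho> \<Longrightarrow> C2_on Dom f \<Longrightarrow> C2_on Dom \<eta> \<Longrightarrow> (\<And>p. p \<notin> K \<Longrightarrow> \<eta> p = 0)
    \<Longrightarrow> cont_supported (\<lambda>p. (grad f p \<bullet> grad \<eta> p) * \<rho> p)"
  by (intro cont_supported_mult_right cont_supported_inner_grad C1_on_continuous_on)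

lemma cont_supported_inner_grad_mult':
  "C1_on Dom \<rho> \<Longrightarrow> C2_on Dom f \<Longrightarrow> C2_on Dom \<eta> \<Longrightarrow> (\<And>p. p \<notin> K \<Longrightarrow> \<eta> p = 0)
    \<Longrightarrow> cont_supported (\<lambda>p. (grad \<eta> p \<bullet> grad f p) * \<rho> p)"
  by (intro cont_supported_mult_right cont_supported_inner_grad' C1_on_continuous_on)

lemma continuous_on_open_square_xint:
  "cont_supported h \<Longrightarrow> continuous_on open_square (\<lambda>z. xint h (fst z) (snd z))"
  by (rule continuous_on_subset[OF cont_supported_xint_continuous]) auto

lemma G_add_cmult_density:
  assumes "C2_on Dom f" "C2_on Dom g" "C2_on Dom \<eta>" "\<And>p. p \<notin> K \<Longrightarrow> \<eta> p = 0"
    and "integrable lborel (\<lambda>x. (grad f (s, t, x) \<bullet> grad g (s, t, x)) * \<rho> (s, t, x))"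
  shows "G f g (\<lambda>p. \<rho> p + e * \<eta> p) s t = G f g \<rho> s t + e * G f g \<eta> s t"
proof -
  have "cont_supported (\<lambda>p. (grad f p \<bullet> grad g p) * \<eta> p)"
    using assms by (intro cont_supported_mult_left cont_supported_C1_on C1_on_continuous_on
        C1_on_inner_grad C2_on_C1_on)
  then have "G f g (\<lambda>p. \<rho> p + e * \<eta> p) s t
      = G f g \<rho> s t + xint (\<lambda>p. e * ((grad f p \<bullet> grad g p) * \<eta> p)) s t"
    unfolding G_def using assms(5)
    by (subst xint_add[symmetric]) (auto simp: algebra_simps intro: xint_cong cont_supported_integrable)
  then show ?thesis
    by (simp add: xint_cmult G_def)
qed

lemma G_add_cmult_both:
  assumes st: "s \<in> {0<..<1}" "t \<in> {0<..<1}" and C: "C1_on Dom \<rho>" "C2_on Dom \<Psi>" "C2_on Dom \<eta>"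
    and \<eta>: "\<And>p. p \<notin> K \<Longrightarrow> \<eta> p = 0"
    and int: "integrable lborel (\<lambda>x. (grad \<Psi> (s, t, x) \<bullet> grad \<Psi> (s, t, x)) * \<rho> (s, t, x))"
  shows "G (\<lambda>p. \<Psi> p + e * \<eta> p) (\<lambda>p. \<Psi> p + e * \<eta> p) \<rho> s t
    = G \<Psi> \<Psi> \<rho> s t + e * (2 * G \<Psi> \<eta> \<rho> s t) + e\<^sup>2 * G \<eta> \<eta> \<rho> s t"
proof -
  note int' = cont_supported_integrable[OF cont_supported_inner_grad_mult[OF C(1) C(2) C(3) \<eta>]]
    cont_supported_integrable[OF cont_supported_inner_grad_mult[OF C(1) C(3) C(3) \<eta>]]
  have grad: "grad (\<lambda>p. \<Psi> p + e * \<eta> p) (s, t, x) = grad \<Psi> (s, t, x) + e *\<^sub>R grad \<eta> (s, t, x)" for x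
    by (rule grad_add_cmult[of _ Dom]) (use st C in \<open>auto intro: C2_on_C1_on\<close>)
  have "G (\<lambda>p. \<Psi> p + e * \<eta> p) (\<lambda>p. \<Psi> p + e * \<eta> p) \<rho> s t
     = xint (\<lambda>p. ((grad \<Psi> p \<bullet> grad \<Psi> p) * \<rho> p + e * (2 * ((grad \<Psi> p \<bullet> grad \<eta> p) * \<rho> p)))
        + e\<^sup>2 * ((grad \<eta> p \<bullet> grad \<eta> p) * \<rho> p)) s t"
    unfolding G_def
    by (intro xint_cong) (simp add: grad inner_add_left inner_add_right
        inner_commute[of "grad \<eta> _" "grad \<Psi> _"] algebra_simps power2_eq_square)
  also have "\<dots> = G \<Psi> \<Psi> \<rho> s t + e * (2 * G \<Psi> \<eta> \<rho> s t) + e\<^sup>2 * G \<eta> \<eta> \<rho> s t"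
    unfolding G_def using int int' by (simp add: xint_add xint_cmult)
  finally show ?thesis .
qed

lemma G_add_cmult_left:
  assumes st: "s \<in> {0<..<1}" "t \<in> {0<..<1}"
    and C: "C1_on Dom \<rho>" "C2_on Dom \<Psi>" "C2_on Dom \<Psi>'" "C2_on Dom \<eta>"
    and \<eta>: "\<And>p. p \<notin> K \<Longrightarrow> \<eta> p = 0"
    and int: "integrable lborel (\<lambda>x. (grad \<Psi> (s, t, x) \<bullet> grad \<Psi>' (s, t, x)) * \<rho> (s, t, x))"
  shows "G (\<lambda>p. \<Psi> p + e * \<eta> p) \<Psi>' \<rho> s t = G \<Psi> \<Psi>' \<rho> s t + e * G \<eta> \<Psi>' \<rho> s t"
proof -
  have grad: "grad (\<lambda>p. \<Psi> p + e * \<eta> p) (s, t, x) = grad \<Psi> (s, t, x) + e *\<^sub>R grad \<eta> (s, t, x)" for x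
    by (rule grad_add_cmult[of _ Dom]) (use st C in \<open>auto intro: C2_on_C1_on\<close>)
  have "G (\<lambda>p. \<Psi> p + e * \<eta> p) \<Psi>' \<rho> s t
      = xint (\<lambda>p. (grad \<Psi> p \<bullet> grad \<Psi>' p) * \<rho> p + e * ((grad \<eta> p \<bullet> grad \<Psi>' p) * \<rho> p)) s t"
    unfolding G_def by (intro xint_cong) (simp add: grad inner_add_left algebra_simps)
  also have "\<dots> = G \<Psi> \<Psi>' \<rho> s t + e * G \<eta> \<Psi>' \<rho> s t"
    unfolding G_def using int cont_supported_integrable[OF cont_supported_inner_grad_mult'[OF C(1,3,4) \<eta>]]
    by (simp add: xint_add xint_cmult)
  finally show ?thesis .
qed

lemma Bcost_add_cmult_Psi:
  assumes st: "s \<in> {0<..<1}" "t \<in> {0<..<1}"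
    and C: "C1_on Dom \<rho>" "C2_on Dom \<Psi>" "C2_on Dom \<Psi>'" "C2_on Dom \<eta>"
    and \<eta>: "\<And>p. p \<notin> K \<Longrightarrow> \<eta> p = 0" and B_pos: "Bcost \<Psi> \<Psi>' \<rho> s t > 0"
    and int: "integrable lborel (\<lambda>x. (grad \<Psi> (s, t, x) \<bullet> grad \<Psi> (s, t, x)) * \<rho> (s, t, x))"
      "integrable lborel (\<lambda>x. (grad \<Psi> (s, t, x) \<bullet> grad \<Psi>' (s, t, x)) * \<rho> (s, t, x))"
  shows "Bcost (\<lambda>p. \<Psi> p + e * \<eta> p) \<Psi>' \<rho> s t = sqrt ((Bcost \<Psi> \<Psi>' \<rho> s t)\<^sup>2
    + e * (2 * G \<Psi> \<eta> \<rho> s t * G \<Psi>' \<Psi>' \<rho> s t - 2 * G \<Psi> \<Psi>' \<rho> s t * G \<eta> \<Psi>' \<rho> s t)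
    + e\<^sup>2 * (G \<eta> \<eta> \<rho> s t * G \<Psi>' \<Psi>' \<rho> s t - (G \<eta> \<Psi>' \<rho> s t)\<^sup>2))"
proof -
  have "G (\<lambda>p. \<Psi> p + e * \<eta> p) (\<lambda>p. \<Psi> p + e * \<eta> p) \<rho> s t
      = G \<Psi> \<Psi> \<rho> s t + e * (2 * G \<Psi> \<eta> \<rho> s t) + e\<^sup>2 * G \<eta> \<eta> \<rho> s t"
    by (rule G_add_cmult_both[OF st C(1,2,4) \<eta> int(1)])
  moreover have "G (\<lambda>p. \<Psi> p + e * \<eta> p) \<Psi>' \<rho> s t = G \<Psi> \<Psi>' \<rho> s t + e * G \<eta> \<Psi>' \<rho> s t"
    by (rule G_add_cmult_left[OF st C \<eta> int(2)])
  ultimately show ?thesis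
    unfolding Bcost_def[of "\<lambda>p. \<Psi> p + e * \<eta> p"] Bcost_squared[OF B_pos]
    by (simp add: algebra_simps power2_eq_square)
qed

lemma Bcost_add_cmult_density:
  assumes C: "C2_on Dom \<Psi>s" "C2_on Dom \<Psi>t" "C2_on Dom \<eta>"
    and \<eta>: "\<And>p. p \<notin> K \<Longrightarrow> \<eta> p = 0" and B_pos: "Bcost \<Psi>s \<Psi>t \<rho> s t > 0"
    and int: "integrable lborel (\<lambda>x. (grad \<Psi>s (s, t, x) \<bullet> grad \<Psi>s (s, t, x)) * \<rho> (s, t, x))"
      "integrable lborel (\<lambda>x. (grad \<Psi>t (s, t, x) \<bullet> grad \<Psi>t (s, t, x)) * \<rho> (s, t, x))"
      "integrable lborel (\<lambda>x. (grad \<Psi>s (s, t, x) \<bullet> grad \<Psi>t (s, t, x)) * \<rho> (s, t, x))"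
  shows "Bcost \<Psi>s \<Psi>t (\<lambda>p. \<rho> p + e * \<eta> p) s t = sqrt ((Bcost \<Psi>s \<Psi>t \<rho> s t)\<^sup>2
    + e * (G \<Psi>s \<Psi>s \<eta> s t * G \<Psi>t \<Psi>t \<rho> s t + G \<Psi>s \<Psi>s \<rho> s t * G \<Psi>t \<Psi>t \<eta> s t
           - 2 * G \<Psi>s \<Psi>t \<rho> s t * G \<Psi>s \<Psi>t \<eta> s t)
    + e\<^sup>2 * (G \<Psi>s \<Psi>s \<eta> s t * G \<Psi>t \<Psi>t \<eta> s t - (G \<Psi>s \<Psi>t \<eta> s t)\<^sup>2))"
  unfolding Bcost_def[of \<Psi>s \<Psi>t "\<lambda>p. \<rho> p + e * \<eta> p"] Bcost_squared[OF B_pos]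
  using G_add_cmult_density[OF C(1,1,3) \<eta> int(1)] G_add_cmult_density[OF C(2,2,3) \<eta> int(2)]
    G_add_cmult_density[OF C(1,2,3) \<eta> int(3)]
  by (simp add: algebra_simps power2_eq_square)

text \<open>The Gram entries are quadratic in \<open>e\<close>, and the tested \<open>\<Psi>\<close>-equation kills the first-order
  term of the square root.\<close>
lemma first_variation_Psi:
  fixes \<rho> \<Psi> \<Psi>' \<Phi> \<eta> :: "'n pt \<Rightarrow> real"
  assumes C: "C1_on Dom \<rho>" "C2_on Dom \<Psi>" "C2_on Dom \<Psi>'" "C2_on Dom \<Phi>" "C2_on Dom \<eta>"
    and \<eta>: "\<And>p. p \<notin> K \<Longrightarrow> \<eta> p = 0"
    and int: "\<And>s t. s \<in> {0<..<1} \<Longrightarrow> t \<in> {0<..<1} \<Longrightarrow>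
        integrable lborel (\<lambda>x. (grad \<Psi> (s, t, x) \<bullet> grad \<Psi> (s, t, x)) * \<rho> (s, t, x))
      \<and> integrable lborel (\<lambda>x. (grad \<Psi> (s, t, x) \<bullet> grad \<Psi>' (s, t, x)) * \<rho> (s, t, x))"
    and G_cont: "continuous_on open_square (\<lambda>z. G \<Psi> \<Psi> \<rho> (fst z) (snd z))"
      "continuous_on open_square (\<lambda>z. G \<Psi>' \<Psi>' \<rho> (fst z) (snd z))"
      "continuous_on open_square (\<lambda>z. G \<Psi> \<Psi>' \<rho> (fst z) (snd z))"
    and B_pos: "\<And>s t. s \<in> {0<..<1} \<Longrightarrow> t \<in> {0<..<1} \<Longrightarrow> Bcost \<Psi> \<Psi>' \<rho> s t > 0"
    and B_int: "set_integrable lborel ({0..1} \<times> {0..1}) (\<lambda>(s, t). Bcost \<Psi> \<Psi>' \<rho> s t)"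
    and eq: "\<And>s t x. s \<in> {0<..<1} \<Longrightarrow> t \<in> {0<..<1} \<Longrightarrow>
      (1 / Bcost \<Psi> \<Psi>' \<rho> s t) * divg (\<lambda>q. \<rho> q *\<^sub>R (G \<Psi>' \<Psi>' \<rho> s t *\<^sub>R grad \<Psi> q - G \<Psi> \<Psi>' \<rho> s t *\<^sub>R grad \<Psi>' q)) (s, t, x)
        = divg (\<lambda>q. \<rho> q *\<^sub>R grad \<Phi> q) (s, t, x)"
  shows "((\<lambda>e. LINT s:{0..1}|lborel. LINT t:{0..1}|lborel.
      Bcost (\<lambda>p. \<Psi> p + e * \<eta> p) \<Psi>' \<rho> s t + e * xint (\<lambda>p. \<Phi> p * divg (\<lambda>q. \<rho> q *\<^sub>R grad \<eta> q) p) s t)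
      has_real_derivative 0) (at 0)"
proof -
  define h1 where "h1 z = G \<Psi> \<eta> \<rho> (fst z) (snd z)" for z
  define k where "k z = G \<eta> \<eta> \<rho> (fst z) (snd z)" for z
  define h2 where "h2 z = G \<eta> \<Psi>' \<rho> (fst z) (snd z)" for z
  define c where "c z = xint (\<lambda>p. \<Phi> p * divg (\<lambda>q. \<rho> q *\<^sub>R grad \<eta> q) p) (fst z) (snd z)" for z
  define Gtt where "Gtt z = G \<Psi>' \<Psi>' \<rho> (fst z) (snd z)" for z
  define Gst where "Gst z = G \<Psi> \<Psi>' \<rho> (fst z) (snd z)" for z
  define B where "B z = Bcost \<Psi> \<Psi>' \<rho> (fst z) (snd z)" for z
  define a where "a z = 2 * h1 z * Gtt z - 2 * Gst z * h2 z" for z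
  define b where "b z = k z * Gtt z - (h2 z)\<^sup>2" for z
  have "cont_supported (\<lambda>p. \<Phi> p * divg (\<lambda>q. \<rho> q *\<^sub>R grad \<eta> q) p)"
    by (intro cont_supported_mult_left C1_on_continuous_on C2_on_C1_on C(4) cont_supported_divg
        C1_on_scaleR_grad C(1) C(5)) (simp add: grad_eq_0_outside[OF compact_K \<eta>])
  note cs = cont_supported_inner_grad_mult[OF C(1) C(2) C(5) \<eta>]
    cont_supported_inner_grad_mult[OF C(1) C(5) C(5) \<eta>]
    cont_supported_inner_grad_mult'[OF C(1) C(3) C(5) \<eta>] this
  have cont: "continuous_on open_square h1" "continuous_on open_square k" "continuous_on open_square h2"
    "continuous_on open_square c"
    unfolding h1_def k_def h2_def c_def G_def by (auto intro: continuous_on_open_square_xint cs)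
  have B_cont: "continuous_on open_square B"
    unfolding B_def Bcost_def by (intro continuous_intros G_cont)
  have vanish: "a z = 0 \<and> b z = 0 \<and> c z = 0" if "z \<notin> K_params" for z
    using that cs unfolding a_def b_def h1_def k_def h2_def c_def G_def
    by (cases z) (simp add: xint_eq_0_outside_K_params)
  have F: "Bcost (\<lambda>p. \<Psi> p + e * \<eta> p) \<Psi>' \<rho> s t + e * c (s, t)
      = sqrt ((B (s, t))\<^sup>2 + e * a (s, t) + e\<^sup>2 * b (s, t)) + e * c (s, t)"
    if st: "s \<in> {0<..<1}" "t \<in> {0<..<1}" for e s t
    using Bcost_add_cmult_Psi[OF st C(1,2,3,5) \<eta> B_pos[OF st]] int[OF st]
    unfolding B_def a_def b_def h1_def k_def h2_def Gtt_def Gst_def by simp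
  have "((\<lambda>e. LINT s:{0..1}|lborel. LINT t:{0..1}|lborel.
      Bcost (\<lambda>p. \<Psi> p + e * \<eta> p) \<Psi>' \<rho> s t + e * c (s, t)) has_real_derivative
        integral (cbox (0, 0) (1, 1)) (\<lambda>z. if z \<in> open_square then a z / (2 * B z) + c z else 0)) (at 0)"
  proof (rule first_variation_sqrt_integrand[OF _ _ B_cont _ _ cont(4) compact_K_params K_params_subset])
    show "set_integrable lborel ({0..1} \<times> {0..1}) B"
      using B_int by (simp add: B_def[abs_def] case_prod_unfold)
    show "continuous_on open_square a" "continuous_on open_square b"
      unfolding a_def b_def Gtt_def Gst_def by (intro continuous_intros cont G_cont)+
  qed (use B_pos vanish F in \<open>auto simp: B_def\<close>)
  moreover have "a z / (2 * B z) + c z = 0" if zS: "z \<in> open_square" for z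
  proof -
    obtain s t where z: "z = (s, t)" "s \<in> {0<..<1}" "t \<in> {0<..<1}"
      using zS by (cases z) auto
    have "(Gtt z * h1 z - Gst z * h2 z) / B z + c z = 0"
      unfolding z h1_def h2_def c_def Gtt_def Gst_def B_def fst_conv snd_conv
      by (rule Psi_equation_weak[OF z(2,3) C \<eta> eq[OF z(2,3)]])
    then show ?thesis
      unfolding a_def using B_pos[OF z(2,3)] by (simp add: B_def z field_simps)
  qed
  ultimately show ?thesis
    unfolding c_def by (simp cong: if_cong)
qed

end

lemma test_fun_support_box:
  fixes \<eta> :: "'n::finite pt \<Rightarrow> real"
  assumes "test_fun \<eta>"
  obtains K a b where "support_box K a b" "C2_on Dom \<eta>" "\<And>p. p \<notin> K \<Longrightarrow> \<eta> p = 0"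
proof -
  obtain K where sm: "smooth_on UNIV \<eta>" and K: "compact K" "K \<subseteq> Dom" and \<eta>: "\<forall>p. p \<notin> K \<longrightarrow> \<eta> p = 0"
    using assms unfolding test_fun_def by blast
  have "bounded ((\<lambda>p. snd (snd p)) ` K)"
    by (intro compact_imp_bounded compact_continuous_image K(1)) (auto intro!: continuous_intros)
  then obtain a :: "real^'n" where "(\<lambda>p. snd (snd p)) ` K \<subseteq> cbox (- a) a"
    using bounded_subset_cbox_symmetric by blast
  then have "support_box K (- a) a"
    using K by unfold_locales auto
  moreover have "C2_on Dom \<eta>"
    using smooth_on_subset[OF sm] by (intro smooth_on_imp_C2_on) auto
  ultimately show ?thesis
    using \<eta> by (intro that) auto
qed

section \<open>The first variations of the Lagrangian\<close>

locale critical_system =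
  fixes \<rho> \<Psi>s \<Psi>t \<Phi>s \<Phi>t :: "'n::finite pt \<Rightarrow> real"
  assumes C2: "C2_on Dom \<rho>" "C2_on Dom \<Psi>s" "C2_on Dom \<Psi>t" "C2_on Dom \<Phi>s" "C2_on Dom \<Phi>t"
    and gram_int: "\<And>s t. s \<in> {0<..<1} \<Longrightarrow> t \<in> {0<..<1} \<Longrightarrow>
        integrable lborel (\<lambda>x. (grad \<Psi>s (s, t, x) \<bullet> grad \<Psi>s (s, t, x)) * \<rho> (s, t, x))
      \<and> integrable lborel (\<lambda>x. (grad \<Psi>t (s, t, x) \<bullet> grad \<Psi>t (s, t, x)) * \<rho> (s, t, x))
      \<and> integrable lborel (\<lambda>x. (grad \<Psi>s (s, t, x) \<bullet> grad \<Psi>t (s, t, x)) * \<rho> (s, t, x))"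
    and gram_cont: "continuous_on open_square (\<lambda>(s, t). G \<Psi>s \<Psi>s \<rho> s t)"
      "continuous_on open_square (\<lambda>(s, t). G \<Psi>t \<Psi>t \<rho> s t)"
      "continuous_on open_square (\<lambda>(s, t). G \<Psi>s \<Psi>t \<rho> s t)"
    and B_pos: "\<And>s t. s \<in> {0<..<1} \<Longrightarrow> t \<in> {0<..<1} \<Longrightarrow> Bcost \<Psi>s \<Psi>t \<rho> s t > 0"
    and B_int: "set_integrable lborel ({0..1} \<times> {0..1}) (\<lambda>(s, t). Bcost \<Psi>s \<Psi>t \<rho> s t)"
    and eq_s: "\<And>p. p \<in> Dom \<Longrightarrow>
        (let s = fst p; t = fst (snd p) in
          (1 / Bcost \<Psi>s \<Psi>t \<rho> s t) *
            divg (\<lambda>q. \<rho> q *\<^sub>R (G \<Psi>t \<Psi>t \<rho> s t *\<^sub>R grad \<Psi>s q - G \<Psi>s \<Psi>t \<rho> s t *\<^sub>R grad \<Psi>t q)) p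
          = divg (\<lambda>q. \<rho> q *\<^sub>R grad \<Phi>s q) p)"
    and eq_t: "\<And>p. p \<in> Dom \<Longrightarrow>
        (let s = fst p; t = fst (snd p) in
          (1 / Bcost \<Psi>s \<Psi>t \<rho> s t) *
            divg (\<lambda>q. \<rho> q *\<^sub>R (G \<Psi>s \<Psi>s \<rho> s t *\<^sub>R grad \<Psi>t q - G \<Psi>s \<Psi>t \<rho> s t *\<^sub>R grad \<Psi>s q)) p
          = divg (\<lambda>q. \<rho> q *\<^sub>R grad \<Phi>t q) p)"
    and eq_rho: "\<And>p. p \<in> Dom \<Longrightarrow>
        (let s = fst p; t = fst (snd p) in
          dS \<Phi>s p + dT \<Phi>t p + grad \<Phi>s p \<bullet> grad \<Psi>s p + grad \<Phi>t p \<bullet> grad \<Psi>t p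
          - (1 / Bcost \<Psi>s \<Psi>t \<rho> s t) *
              ((1/2) * (grad \<Psi>s p \<bullet> grad \<Psi>s p) * G \<Psi>t \<Psi>t \<rho> s t
             + (1/2) * (grad \<Psi>t p \<bullet> grad \<Psi>t p) * G \<Psi>s \<Psi>s \<rho> s t
             - (grad \<Psi>t p \<bullet> grad \<Psi>s p) * G \<Psi>t \<Psi>s \<rho> s t) = 0)"
    and cont_s: "\<And>p. p \<in> Dom \<Longrightarrow> dS \<rho> p + divg (\<lambda>q. \<rho> q *\<^sub>R grad \<Psi>s q) p = 0"
    and cont_t: "\<And>p. p \<in> Dom \<Longrightarrow> dT \<rho> p + divg (\<lambda>q. \<rho> q *\<^sub>R grad \<Psi>t q) p = 0"
begin

lemma C1_on_rho: "C1_on Dom \<rho>"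
  by (rule C2_on_C1_on[OF C2(1)])

lemma G_continuous:
  "continuous_on open_square (\<lambda>z. G \<Psi>s \<Psi>s \<rho> (fst z) (snd z))"
  "continuous_on open_square (\<lambda>z. G \<Psi>t \<Psi>t \<rho> (fst z) (snd z))"
  "continuous_on open_square (\<lambda>z. G \<Psi>s \<Psi>t \<rho> (fst z) (snd z))"
  "continuous_on open_square (\<lambda>z. G \<Psi>t \<Psi>s \<rho> (fst z) (snd z))"
  using gram_cont by (simp_all add: case_prod_unfold G_commute[of \<Psi>t \<Psi>s])

lemma Lag_add_cmult_Phi_s: "Lag \<rho> \<Psi>s \<Psi>t (\<lambda>p. \<Phi>s p + e * \<eta> p) \<Phi>t = Lag \<rho> \<Psi>s \<Psi>t \<Phi>s \<Phi>t"
  unfolding Lag_def by (rule iterated_integral_cong_open_square) (simp add: xint_def cont_s cont_t)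

lemma Lag_add_cmult_Phi_t: "Lag \<rho> \<Psi>s \<Psi>t \<Phi>s (\<lambda>p. \<Phi>t p + e * \<eta> p) = Lag \<rho> \<Psi>s \<Psi>t \<Phi>s \<Phi>t"
  unfolding Lag_def by (rule iterated_integral_cong_open_square) (simp add: xint_def cont_s cont_t)

lemma constraints_add_cmult_rho:
  assumes "p \<in> Dom" "C1_on Dom \<eta>"
  shows "\<Phi>s p * (dS (\<lambda>p. \<rho> p + e * \<eta> p) p + divg (\<lambda>q. (\<rho> q + e * \<eta> q) *\<^sub>R grad \<Psi>s q) p)
       + \<Phi>t p * (dT (\<lambda>p. \<rho> p + e * \<eta> p) p + divg (\<lambda>q. (\<rho> q + e * \<eta> q) *\<^sub>R grad \<Psi>t q) p)
     = e * (\<Phi>s p * (dS \<eta> p + divg (\<lambda>q. \<eta> q *\<^sub>R grad \<Psi>s q) p)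
          + \<Phi>t p * (dT \<eta> p + divg (\<lambda>q. \<eta> q *\<^sub>R grad \<Psi>t q) p))"
proof -
  have d: "dS (\<lambda>p. \<rho> p + e * \<eta> p) p = dS \<rho> p + e * dS \<eta> p"
    "dT (\<lambda>p. \<rho> p + e * \<eta> p) p = dT \<rho> p + e * dT \<eta> p"
    unfolding dS_def dT_def by (rule pd_add_cmult[OF assms(1) C1_on_rho assms(2)])+
  have c: "dS \<rho> p = - divg (\<lambda>q. \<rho> q *\<^sub>R grad \<Psi>s q) p" "dT \<rho> p = - divg (\<lambda>q. \<rho> q *\<^sub>R grad \<Psi>t q) p"
    using cont_s[OF assms(1)] cont_t[OF assms(1)] by linarith+
  show ?thesis
    unfolding d c divg_add_cmult_scaleR_grad[OF assms(1) C1_on_rho assms(2) C2(2)]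
      divg_add_cmult_scaleR_grad[OF assms(1) C1_on_rho assms(2) C2(3)]
    by (simp add: algebra_simps)
qed

lemma constraints_add_cmult_Psi_s:
  assumes "p \<in> Dom" "C2_on Dom \<eta>"
  shows "\<Phi>s p * (dS \<rho> p + divg (\<lambda>q. \<rho> q *\<^sub>R grad (\<lambda>p. \<Psi>s p + e * \<eta> p) q) p)
       + \<Phi>t p * (dT \<rho> p + divg (\<lambda>q. \<rho> q *\<^sub>R grad \<Psi>t q) p)
     = e * (\<Phi>s p * divg (\<lambda>q. \<rho> q *\<^sub>R grad \<eta> q) p)"
proof -
  have "dS \<rho> p = - divg (\<lambda>q. \<rho> q *\<^sub>R grad \<Psi>s q) p" "dT \<rho> p + divg (\<lambda>q. \<rho> q *\<^sub>R grad \<Psi>t q) p = 0"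
    using cont_s[OF assms(1)] cont_t[OF assms(1)] by linarith+
  then show ?thesis
    unfolding divg_scaleR_grad_add_cmult[OF assms(1) C1_on_rho C2(2) assms(2)] by (simp add: algebra_simps)
qed

lemma constraints_add_cmult_Psi_t:
  assumes "p \<in> Dom" "C2_on Dom \<eta>"
  shows "\<Phi>s p * (dS \<rho> p + divg (\<lambda>q. \<rho> q *\<^sub>R grad \<Psi>s q) p)
       + \<Phi>t p * (dT \<rho> p + divg (\<lambda>q. \<rho> q *\<^sub>R grad (\<lambda>p. \<Psi>t p + e * \<eta> p) q) p)
     = e * (\<Phi>t p * divg (\<lambda>q. \<rho> q *\<^sub>R grad \<eta> q) p)"
proof -
  have "dS \<rho> p + divg (\<lambda>q. \<rho> q *\<^sub>R grad \<Psi>s q) p = 0" "dT \<rho> p = - divg (\<lambda>q. \<rho> q *\<^sub>R grad \<Psi>t q) p"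
    using cont_s[OF assms(1)] cont_t[OF assms(1)] by linarith+
  then show ?thesis
    unfolding divg_scaleR_grad_add_cmult[OF assms(1) C1_on_rho C2(3) assms(2)] by (simp add: algebra_simps)
qed

end

locale critical_system_variation = critical_system \<rho> \<Psi>s \<Psi>t \<Phi>s \<Phi>t + support_box K a b
  for \<rho> \<Psi>s \<Psi>t \<Phi>s \<Phi>t :: "'n::finite pt \<Rightarrow> real" and K :: "'n pt set" and a b :: "real^'n" +
  fixes \<eta> :: "'n pt \<Rightarrow> real"
  assumes C2_eta: "C2_on Dom \<eta>" and eta_outside: "\<And>p. p \<notin> K \<Longrightarrow> \<eta> p = 0"
begin

lemma variation_Psi_s: "((\<lambda>e. Lag \<rho> (\<lambda>p. \<Psi>s p + e * \<eta> p) \<Psi>t \<Phi>s \<Phi>t) has_real_derivative 0) (at 0)"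
proof -
  have "Lag \<rho> (\<lambda>p. \<Psi>s p + e * \<eta> p) \<Psi>t \<Phi>s \<Phi>t = (LINT s:{0..1}|lborel. LINT t:{0..1}|lborel.
      Bcost (\<lambda>p. \<Psi>s p + e * \<eta> p) \<Psi>t \<rho> s t + e * xint (\<lambda>p. \<Phi>s p * divg (\<lambda>q. \<rho> q *\<^sub>R grad \<eta> q) p) s t)"
    for e
    unfolding Lag_def
    by (intro iterated_integral_cong_open_square arg_cong2[where f="(+)"] refl)
      (simp add: xint_cmult[symmetric] constraints_add_cmult_Psi_s C2_eta cong: xint_cong)
  moreover have "((\<lambda>e. LINT s:{0..1}|lborel. LINT t:{0..1}|lborel.
      Bcost (\<lambda>p. \<Psi>s p + e * \<eta> p) \<Psi>t \<rho> s t + e * xint (\<lambda>p. \<Phi>s p * divg (\<lambda>q. \<rho> q *\<^sub>R grad \<eta> q) p) s t)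
      has_real_derivative 0) (at 0)"
  proof (rule first_variation_Psi[OF C1_on_rho C2(2,3,4) C2_eta eta_outside _ G_continuous(1,2,3) B_pos B_int])
    show "integrable lborel (\<lambda>x. (grad \<Psi>s (s, t, x) \<bullet> grad \<Psi>s (s, t, x)) * \<rho> (s, t, x))
      \<and> integrable lborel (\<lambda>x. (grad \<Psi>s (s, t, x) \<bullet> grad \<Psi>t (s, t, x)) * \<rho> (s, t, x))"
      if "s \<in> {0<..<1}" "t \<in> {0<..<1}" for s t
      using gram_int[OF that] by blast
    show "(1 / Bcost \<Psi>s \<Psi>t \<rho> s t) * divg (\<lambda>q. \<rho> q *\<^sub>R (G \<Psi>t \<Psi>t \<rho> s t *\<^sub>R grad \<Psi>s q
        - G \<Psi>s \<Psi>t \<rho> s t *\<^sub>R grad \<Psi>t q)) (s, t, x) = divg (\<lambda>q. \<rho> q *\<^sub>R grad \<Phi>s q) (s, t, x)"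
      if "s \<in> {0<..<1}" "t \<in> {0<..<1}" for s t x
      using eq_s[of "(s, t, x)"] that by (simp add: Let_def)
  qed
  ultimately show ?thesis
    by simp
qed

lemma variation_Psi_t: "((\<lambda>e. Lag \<rho> \<Psi>s (\<lambda>p. \<Psi>t p + e * \<eta> p) \<Phi>s \<Phi>t) has_real_derivative 0) (at 0)"
proof -
  have "Lag \<rho> \<Psi>s (\<lambda>p. \<Psi>t p + e * \<eta> p) \<Phi>s \<Phi>t = (LINT s:{0..1}|lborel. LINT t:{0..1}|lborel.
      Bcost (\<lambda>p. \<Psi>t p + e * \<eta> p) \<Psi>s \<rho> s t + e * xint (\<lambda>p. \<Phi>t p * divg (\<lambda>q. \<rho> q *\<^sub>R grad \<eta> q) p) s t)"
    for e
    unfolding Lag_def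
    by (intro iterated_integral_cong_open_square arg_cong2[where f="(+)"] Bcost_commute)
      (simp add: xint_cmult[symmetric] constraints_add_cmult_Psi_t C2_eta cong: xint_cong)
  moreover have "((\<lambda>e. LINT s:{0..1}|lborel. LINT t:{0..1}|lborel.
      Bcost (\<lambda>p. \<Psi>t p + e * \<eta> p) \<Psi>s \<rho> s t + e * xint (\<lambda>p. \<Phi>t p * divg (\<lambda>q. \<rho> q *\<^sub>R grad \<eta> q) p) s t)
      has_real_derivative 0) (at 0)"
  proof (rule first_variation_Psi[OF C1_on_rho C2(3,2,5) C2_eta eta_outside _ G_continuous(2,1,4)])
    show "integrable lborel (\<lambda>x. (grad \<Psi>t (s, t, x) \<bullet> grad \<Psi>t (s, t, x)) * \<rho> (s, t, x))
      \<and> integrable lborel (\<lambda>x. (grad \<Psi>t (s, t, x) \<bullet> grad \<Psi>s (s, t, x)) * \<rho> (s, t, x))"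
      if "s \<in> {0<..<1}" "t \<in> {0<..<1}" for s t
      using gram_int[OF that] by (simp add: inner_commute)
    show "Bcost \<Psi>t \<Psi>s \<rho> s t > 0" if "s \<in> {0<..<1}" "t \<in> {0<..<1}" for s t
      using B_pos[OF that] by (simp add: Bcost_commute)
    show "set_integrable lborel ({0..1} \<times> {0..1}) (\<lambda>(s, t). Bcost \<Psi>t \<Psi>s \<rho> s t)"
      using B_int by (simp add: Bcost_commute[of \<Psi>t])
    show "(1 / Bcost \<Psi>t \<Psi>s \<rho> s t) * divg (\<lambda>q. \<rho> q *\<^sub>R (G \<Psi>s \<Psi>s \<rho> s t *\<^sub>R grad \<Psi>t q
        - G \<Psi>t \<Psi>s \<rho> s t *\<^sub>R grad \<Psi>s q)) (s, t, x) = divg (\<lambda>q. \<rho> q *\<^sub>R grad \<Phi>t q) (s, t, x)"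
      if "s \<in> {0<..<1}" "t \<in> {0<..<1}" for s t x
      using eq_t[of "(s, t, x)"] that by (simp add: Let_def Bcost_commute[of \<Psi>t] G_commute[of \<Psi>t \<Psi>s])
  qed
  ultimately show ?thesis
    by simp
qed


lemma C1_on_eta: "C1_on Dom \<eta>"
  by (rule C2_on_C1_on[OF C2_eta])

lemma integral_xint_dS_dT_eq_0:
  "integral (cbox (0, 0) (1, 1))
     (\<lambda>z. xint (\<lambda>p. dS (\<lambda>q. \<Phi>s q * \<eta> q) p + dT (\<lambda>q. \<Phi>t q * \<eta> q) p) (fst z) (snd z)) = 0"
proof -
  have C: "C1_on Dom (\<lambda>q. \<Phi>s q * \<eta> q)" "C1_on Dom (\<lambda>q. \<Phi>t q * \<eta> q)"
    by (intro C1_on_mult C2_on_C1_on C2 C2_eta)+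
  have cs: "cont_supported (dS (\<lambda>q. \<Phi>s q * \<eta> q))" "cont_supported (dT (\<lambda>q. \<Phi>t q * \<eta> q))"
    unfolding dS_def[abs_def] dT_def[abs_def] using C eta_outside by (auto intro!: cont_supported_pd)
  have "integral (cbox (0, 0) (1, 1))
      (\<lambda>z. xint (\<lambda>p. dS (\<lambda>q. \<Phi>s q * \<eta> q) p + dT (\<lambda>q. \<Phi>t q * \<eta> q) p) (fst z) (snd z))
    = integral (cbox (0, 0) (1, 1)) (\<lambda>z. xint (dS (\<lambda>q. \<Phi>s q * \<eta> q)) (fst z) (snd z))
      + integral (cbox (0, 0) (1, 1)) (\<lambda>z. xint (dT (\<lambda>q. \<Phi>t q * \<eta> q)) (fst z) (snd z))"
  proof -
    have "continuous_on (cbox (0, 0) (1, 1)) (\<lambda>z. xint (dS (\<lambda>q. \<Phi>s q * \<eta> q)) (fst z) (snd z))"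
      "continuous_on (cbox (0, 0) (1, 1)) (\<lambda>z. xint (dT (\<lambda>q. \<Phi>t q * \<eta> q)) (fst z) (snd z))"
      by (intro continuous_on_subset[OF cont_supported_xint_continuous] cs subset_UNIV)+
    then show ?thesis
      by (simp add: xint_add_cont_supported[OF cs] integral_add integrable_continuous)
  qed
  also have "\<dots> = 0"
    using integral_xint_dS_eq_0[OF C(1)] integral_xint_dT_eq_0[OF C(2)] by (simp add: eta_outside)
  finally show ?thesis .
qed

lemma rho_equation_tested:
  assumes st: "s \<in> {0<..<1}" "t \<in> {0<..<1}"
  shows "(G \<Psi>s \<Psi>s \<eta> s t * G \<Psi>t \<Psi>t \<rho> s t + G \<Psi>s \<Psi>s \<rho> s t * G \<Psi>t \<Psi>t \<eta> s t
        - 2 * G \<Psi>s \<Psi>t \<rho> s t * G \<Psi>s \<Psi>t \<eta> s t) / (2 * Bcost \<Psi>s \<Psi>t \<rho> s t)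
      + xint (\<lambda>p. \<Phi>s p * (dS \<eta> p + divg (\<lambda>q. \<eta> q *\<^sub>R grad \<Psi>s q) p)
          + \<Phi>t p * (dT \<eta> p + divg (\<lambda>q. \<eta> q *\<^sub>R grad \<Psi>t q) p)) s t
    = xint (\<lambda>p. dS (\<lambda>q. \<Phi>s q * \<eta> q) p + dT (\<lambda>q. \<Phi>t q * \<eta> q) p) s t"
proof (rule rho_equation_weak[OF st C2(2-5) C2_eta eta_outside])
  fix x
  show "dS \<Phi>s (s, t, x) + dT \<Phi>t (s, t, x) + grad \<Phi>s (s, t, x) \<bullet> grad \<Psi>s (s, t, x)
    + grad \<Phi>t (s, t, x) \<bullet> grad \<Psi>t (s, t, x)
    - (1 / Bcost \<Psi>s \<Psi>t \<rho> s t) * ((1/2) * (grad \<Psi>s (s, t, x) \<bullet> grad \<Psi>s (s, t, x)) * G \<Psi>t \<Psi>t \<rho> s t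
       + (1/2) * (grad \<Psi>t (s, t, x) \<bullet> grad \<Psi>t (s, t, x)) * G \<Psi>s \<Psi>s \<rho> s t
       - (grad \<Psi>t (s, t, x) \<bullet> grad \<Psi>s (s, t, x)) * G \<Psi>s \<Psi>t \<rho> s t) = 0"
    using eq_rho[of "(s, t, x)"] st by (simp add: Let_def G_commute[of \<Psi>t \<Psi>s])
qed

lemma variation_rho: "((\<lambda>e. Lag (\<lambda>p. \<rho> p + e * \<eta> p) \<Psi>s \<Psi>t \<Phi>s \<Phi>t) has_real_derivative 0) (at 0)"
proof -
  define gss where "gss z = G \<Psi>s \<Psi>s \<eta> (fst z) (snd z)" for z
  define gtt where "gtt z = G \<Psi>t \<Psi>t \<eta> (fst z) (snd z)" for z
  define gst where "gst z = G \<Psi>s \<Psi>t \<eta> (fst z) (snd z)" for z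
  define Gss where "Gss z = G \<Psi>s \<Psi>s \<rho> (fst z) (snd z)" for z
  define Gtt where "Gtt z = G \<Psi>t \<Psi>t \<rho> (fst z) (snd z)" for z
  define Gst where "Gst z = G \<Psi>s \<Psi>t \<rho> (fst z) (snd z)" for z
  define B where "B z = Bcost \<Psi>s \<Psi>t \<rho> (fst z) (snd z)" for z
  define a where "a z = gss z * Gtt z + Gss z * gtt z - 2 * Gst z * gst z" for z
  define b where "b z = gss z * gtt z - (gst z)\<^sup>2" for z
  define k where "k p = \<Phi>s p * (dS \<eta> p + divg (\<lambda>q. \<eta> q *\<^sub>R grad \<Psi>s q) p)
    + \<Phi>t p * (dT \<eta> p + divg (\<lambda>q. \<eta> q *\<^sub>R grad \<Psi>t q) p)" for p
  define c where "c z = xint k (fst z) (snd z)" for z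
  define h where "h p = dS (\<lambda>q. \<Phi>s q * \<eta> q) p + dT (\<lambda>q. \<Phi>t q * \<eta> q) p" for p
  have cs_G: "cont_supported (\<lambda>p. (grad f p \<bullet> grad g p) * \<eta> p)" if "C2_on Dom f" "C2_on Dom g" for f g
    by (intro cont_supported_mult_left C1_on_continuous_on C1_on_inner_grad that
        cont_supported_C1_on[OF C1_on_eta eta_outside])
  have cs_k: "cont_supported k"
    unfolding k_def[abs_def] dS_def dT_def
    by (intro cont_supported_add cont_supported_mult_left cont_supported_pd cont_supported_divg
        C1_on_continuous_on C2_on_C1_on C2 C1_on_eta C1_on_scaleR_grad) (simp_all add: eta_outside)
  have cont: "continuous_on open_square gss" "continuous_on open_square gtt" "continuous_on open_square gst"
    "continuous_on open_square c"
    unfolding gss_def gtt_def gst_def c_def G_def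
    by (intro continuous_on_open_square_xint cs_G cs_k C2)+
  have B_cont: "continuous_on open_square B"
    unfolding B_def Bcost_def by (intro continuous_intros G_continuous)
  have vanish: "a z = 0 \<and> b z = 0 \<and> c z = 0" if "z \<notin> K_params" for z
    using that cs_G[OF C2(2,2)] cs_G[OF C2(3,3)] cs_G[OF C2(2,3)] cs_k
    unfolding a_def b_def gss_def gtt_def gst_def c_def G_def by (cases z) (simp add: xint_eq_0_outside_K_params)
  have F: "Bcost \<Psi>s \<Psi>t (\<lambda>p. \<rho> p + e * \<eta> p) s t
      + xint (\<lambda>p. \<Phi>s p * (dS (\<lambda>p. \<rho> p + e * \<eta> p) p + divg (\<lambda>q. (\<rho> q + e * \<eta> q) *\<^sub>R grad \<Psi>s q) p)
        + \<Phi>t p * (dT (\<lambda>p. \<rho> p + e * \<eta> p) p + divg (\<lambda>q. (\<rho> q + e * \<eta> q) *\<^sub>R grad \<Psi>t q) p)) s t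
    = sqrt ((B (s, t))\<^sup>2 + e * a (s, t) + e\<^sup>2 * b (s, t)) + e * c (s, t)"
    if st: "s \<in> {0<..<1}" "t \<in> {0<..<1}" for e s t
  proof -
    have "xint (\<lambda>p. \<Phi>s p * (dS (\<lambda>p. \<rho> p + e * \<eta> p) p
          + divg (\<lambda>q. (\<rho> q + e * \<eta> q) *\<^sub>R grad \<Psi>s q) p)
        + \<Phi>t p * (dT (\<lambda>p. \<rho> p + e * \<eta> p) p + divg (\<lambda>q. (\<rho> q + e * \<eta> q) *\<^sub>R grad \<Psi>t q) p)) s t
      = e * c (s, t)"
      unfolding c_def k_def fst_conv snd_conv xint_cmult[symmetric]
      by (intro xint_cong) (use st in \<open>simp add: constraints_add_cmult_rho C1_on_eta\<close>)
    then show ?thesis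
      using Bcost_add_cmult_density[OF C2(2,3) C2_eta eta_outside B_pos[OF st]] gram_int[OF st]
      unfolding B_def a_def b_def gss_def gtt_def gst_def Gss_def Gtt_def Gst_def by simp
  qed
  have "((\<lambda>e. Lag (\<lambda>p. \<rho> p + e * \<eta> p) \<Psi>s \<Psi>t \<Phi>s \<Phi>t) has_real_derivative
      integral (cbox (0, 0) (1, 1)) (\<lambda>z. if z \<in> open_square then a z / (2 * B z) + c z else 0)) (at 0)"
    unfolding Lag_def
  proof (rule first_variation_sqrt_integrand[OF _ _ B_cont _ _ cont(4) compact_K_params K_params_subset])
    show "set_integrable lborel ({0..1} \<times> {0..1}) B"
      using B_int by (simp add: B_def[abs_def] case_prod_unfold)
    show "continuous_on open_square a" "continuous_on open_square b"
      unfolding a_def b_def Gss_def Gtt_def Gst_def by (intro continuous_intros cont G_continuous)+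
  qed (use B_pos vanish F in \<open>auto simp: B_def\<close>)
  moreover have "(if z \<in> open_square then a z / (2 * B z) + c z else 0) = xint h (fst z) (snd z)" for z
  proof (cases "z \<in> open_square")
    case True
    then show ?thesis
      using rho_equation_tested[of "fst z" "snd z"]
      unfolding a_def gss_def gtt_def gst_def Gss_def Gtt_def Gst_def B_def c_def k_def h_def
      by (simp add: mem_Times_iff)
  next
    case False
    have "cont_supported h"
      unfolding h_def[abs_def] dS_def dT_def
      by (intro cont_supported_add cont_supported_pd C1_on_mult C2_on_C1_on C2 C2_eta)
        (simp_all add: eta_outside)
    then have "xint h (fst z) (snd z) = 0"
      using False by (intro xint_eq_0_outside_open_square) simp_all
    then show ?thesis
      using False by simp
  qed
  ultimately show ?thesis
    using integral_xint_dS_dT_eq_0 unfolding h_def by simp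
qed

end

context critical_system
begin

theorem critical_point: "critical_point \<rho> \<Psi>s \<Psi>t \<Phi>s \<Phi>t"
  unfolding critical_point_def
proof (intro allI impI)
  fix \<eta> :: "'n pt \<Rightarrow> real"
  assume "test_fun \<eta>"
  then obtain K a b where "support_box K a b" "C2_on Dom \<eta>" "\<And>p. p \<notin> K \<Longrightarrow> \<eta> p = 0"
    by (rule test_fun_support_box) blast
  then have test: "critical_system_variation \<rho> \<Psi>s \<Psi>t \<Phi>s \<Phi>t K a b \<eta>"
    by (intro critical_system_variation.intro critical_system_axioms critical_system_variation_axioms.intro)
  show "((\<lambda>\<epsilon>. Lag (\<lambda>p. \<rho> p + \<epsilon> * \<eta> p) \<Psi>s \<Psi>t \<Phi>s \<Phi>t) has_real_derivative 0) (at 0) \<and>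
    ((\<lambda>\<epsilon>. Lag \<rho> (\<lambda>p. \<Psi>s p + \<epsilon> * \<eta> p) \<Psi>t \<Phi>s \<Phi>t) has_real_derivative 0) (at 0) \<and>
    ((\<lambda>\<epsilon>. Lag \<rho> \<Psi>s (\<lambda>p. \<Psi>t p + \<epsilon> * \<eta> p) \<Phi>s \<Phi>t) has_real_derivative 0) (at 0) \<and>
    ((\<lambda>\<epsilon>. Lag \<rho> \<Psi>s \<Psi>t (\<lambda>p. \<Phi>s p + \<epsilon> * \<eta> p) \<Phi>t) has_real_derivative 0) (at 0) \<and>
    ((\<lambda>\<epsilon>. Lag \<rho> \<Psi>s \<Psi>t \<Phi>s (\<lambda>p. \<Phi>t p + \<epsilon> * \<eta> p)) has_real_derivative 0) (at 0)"
    using critical_system_variation.variation_rho[OF test] critical_system_variation.variation_Psi_s[OF test]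
      critical_system_variation.variation_Psi_t[OF test]
    by (simp add: Lag_add_cmult_Phi_s Lag_add_cmult_Phi_t)
qed

end

theorem mainTheorem2:
  fixes \<rho> \<Psi>s \<Psi>t \<Phi>s \<Phi>t :: "('n::finite) pt \<Rightarrow> real"
  assumes smooth: "smooth_on Dom \<rho>" "smooth_on Dom \<Psi>s" "smooth_on Dom \<Psi>t"
      "smooth_on Dom \<Phi>s" "smooth_on Dom \<Phi>t"
    and density: "\<And>s t. s \<in> {0..1} \<Longrightarrow> t \<in> {0..1} \<Longrightarrow>
        (\<forall>x. \<rho> (s, t, x) \<ge> 0) \<and> integrable lborel (\<lambda>x. \<rho> (s, t, x))
        \<and> (\<integral>x. \<rho> (s, t, x) \<partial>lborel) = 1
        \<and> integrable lborel (\<lambda>x. (norm x)\<^sup>2 * \<rho> (s, t, x))"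
    and gram_int: "\<And>s t. s \<in> {0<..<1} \<Longrightarrow> t \<in> {0<..<1} \<Longrightarrow>
        integrable lborel (\<lambda>x. (grad \<Psi>s (s, t, x) \<bullet> grad \<Psi>s (s, t, x)) * \<rho> (s, t, x))
      \<and> integrable lborel (\<lambda>x. (grad \<Psi>t (s, t, x) \<bullet> grad \<Psi>t (s, t, x)) * \<rho> (s, t, x))
      \<and> integrable lborel (\<lambda>x. (grad \<Psi>s (s, t, x) \<bullet> grad \<Psi>t (s, t, x)) * \<rho> (s, t, x))"
    and gram_cont: "continuous_on ({0<..<1} \<times> {0<..<1}) (\<lambda>(s, t). G \<Psi>s \<Psi>s \<rho> s t)"
      "continuous_on ({0<..<1} \<times> {0<..<1}) (\<lambda>(s, t). G \<Psi>t \<Psi>t \<rho> s t)"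
      "continuous_on ({0<..<1} \<times> {0<..<1}) (\<lambda>(s, t). G \<Psi>s \<Psi>t \<rho> s t)"
    and B_pos: "\<And>s t. s \<in> {0<..<1} \<Longrightarrow> t \<in> {0<..<1} \<Longrightarrow> Bcost \<Psi>s \<Psi>t \<rho> s t > 0"
    and B_int: "set_integrable lborel ({0..1} \<times> {0..1}) (\<lambda>(s, t). Bcost \<Psi>s \<Psi>t \<rho> s t)"
    and eq_s: "\<And>p. p \<in> Dom \<Longrightarrow>
        (let s = fst p; t = fst (snd p) in
          (1 / Bcost \<Psi>s \<Psi>t \<rho> s t) *
            divg (\<lambda>q. \<rho> q *\<^sub>R (G \<Psi>t \<Psi>t \<rho> s t *\<^sub>R grad \<Psi>s q - G \<Psi>s \<Psi>t \<rho> s t *\<^sub>R grad \<Psi>t q)) p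
          = divg (\<lambda>q. \<rho> q *\<^sub>R grad \<Phi>s q) p)"
    and eq_t: "\<And>p. p \<in> Dom \<Longrightarrow>
        (let s = fst p; t = fst (snd p) in
          (1 / Bcost \<Psi>s \<Psi>t \<rho> s t) *
            divg (\<lambda>q. \<rho> q *\<^sub>R (G \<Psi>s \<Psi>s \<rho> s t *\<^sub>R grad \<Psi>t q - G \<Psi>s \<Psi>t \<rho> s t *\<^sub>R grad \<Psi>s q)) p
          = divg (\<lambda>q. \<rho> q *\<^sub>R grad \<Phi>t q) p)"
    and eq_rho: "\<And>p. p \<in> Dom \<Longrightarrow>
        (let s = fst p; t = fst (snd p) in
          dS \<Phi>s p + dT \<Phi>t p + grad \<Phi>s p \<bullet> grad \<Psi>s p + grad \<Phi>t p \<bullet> grad \<Psi>t p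
          - (1 / Bcost \<Psi>s \<Psi>t \<rho> s t) *
              ((1/2) * (grad \<Psi>s p \<bullet> grad \<Psi>s p) * G \<Psi>t \<Psi>t \<rho> s t
             + (1/2) * (grad \<Psi>t p \<bullet> grad \<Psi>t p) * G \<Psi>s \<Psi>s \<rho> s t
             - (grad \<Psi>t p \<bullet> grad \<Psi>s p) * G \<Psi>t \<Psi>s \<rho> s t) = 0)"
    and cont_s: "\<And>p. p \<in> Dom \<Longrightarrow> dS \<rho> p + divg (\<lambda>q. \<rho> q *\<^sub>R grad \<Psi>s q) p = 0"
    and cont_t: "\<And>p. p \<in> Dom \<Longrightarrow> dT \<rho> p + divg (\<lambda>q. \<rho> q *\<^sub>R grad \<Psi>t q) p = 0"
  shows "critical_point \<rho> \<Psi>s \<Psi>t \<Phi>s \<Phi>t"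
proof (rule critical_system.critical_point)
  show "critical_system \<rho> \<Psi>s \<Psi>t \<Phi>s \<Phi>t"
    using smooth gram_int gram_cont B_pos B_int eq_s eq_t eq_rho cont_s cont_t
    by unfold_locales (simp_all add: smooth_on_imp_C2_on)
qed

end
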